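(* Let $G$ be a finite abelian group, $M$ a finitely generated $\mathbb Z[G]$-module, $H\subseteq G$ a subgroup and $s\ge0$. Then there is an isomorphism of $\mathbb Z[G/H]$-modules \[ \textstyle\bigcap^s_{\mathbb Z[G/H]}(M^{**})^H\xrightarrow{\ \sim\ }\big(\bigcap^s_{\mathbb Z[G]}M\big)^H \] whose base change to $\mathbb Q$ is the map $\nu_H:\mathbb Q\otimes\bigwedge^s_{\mathbb Z[G/H]}M^H\to\mathbb Q\otimes\bigwedge^s_{\mathbb Z[G]}M$ given by $x_1\wedge\cdots\wedge x_s\mapsto|H|^{1-s}x_1\wedge\cdots\wedge x_s$ for $s\ge1$ (equivalently, $\mathrm N_Ha_1\wedge\cdots\wedge\mathrm N_Ha_s\mapsto\mathrm N_H\cdot(a_1\wedge\cdots\wedge a_s)$) and by multiplication by $\mathrm N_H$ for $s=0$.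
   Context: For a commutative ring $R$ and $R$-module $N$, $N^*=\mathrm{Hom}_R(N,R)$ and the $s$-th exterior bidual is $\bigcap^s_RN=(\bigwedge^s_RN^* )^*$. Here $R=\mathbb Z[G]$ or $\mathbb Z[G/H]$; $(M^{**})^H$ is regarded as a $\mathbb Z[G/H]$-module. $\mathrm N_H=\sum_{h\in H}h$. After tensoring with $\mathbb Q$, $\mathbb Q\otimes\bigcap^s_RN$ is identified with $\bigwedge^s_{\mathbb Q\otimes R}(\mathbb Q\otimes N)$ (the group algebras being semisimple), and $\mathbb Q\otimes(M^{**})^H=(\mathbb Q\otimes M)^H$. *)

theory Defs
  imports "HOL-Algebra.Algebra" "HOL-Combinatorics.Permutations"
begin

definition group_ring :: "('g, 'z) monoid_scheme \<Rightarrow> ('g \<Rightarrow> int) ring" where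
  "group_ring G =
     \<lparr>carrier = {f. \<forall>x. x \<notin> carrier G \<longrightarrow> f x = 0},
      monoid.mult = (\<lambda>f k x. if x \<in> carrier G
                        then (\<Sum>y\<in>carrier G. f y * k (inv\<^bsub>G\<^esub> y \<otimes>\<^bsub>G\<^esub> x)) else 0),
      monoid.one = (\<lambda>x. if x = \<one>\<^bsub>G\<^esub> then 1 else 0),
      ring.zero = (\<lambda>x. 0),
      ring.add = (\<lambda>f k x. f x + k x)\<rparr>"

definition gr_elem :: "('g, 'z) monoid_scheme \<Rightarrow> 'g \<Rightarrow> ('g \<Rightarrow> int)" where
  "gr_elem G g = (\<lambda>x. if x = g \<and> g \<in> carrier G then 1 else 0)"

definition norm_elem :: "('g, 'z) monoid_scheme \<Rightarrow> 'g set \<Rightarrow> ('g \<Rightarrow> int)" where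
  "norm_elem G H = (\<lambda>x. if x \<in> H \<and> x \<in> carrier G then 1 else 0)"

definition linear_form :: "('r, 'a) ring_scheme \<Rightarrow> ('r, 'n, 'b) module_scheme \<Rightarrow> ('n \<Rightarrow> 'r) \<Rightarrow> bool" where
  "linear_form R N f \<longleftrightarrow>
     f \<in> carrier N \<rightarrow> carrier R \<and> f \<in> extensional (carrier N) \<and>
     (\<forall>x\<in>carrier N. \<forall>y\<in>carrier N. f (x \<oplus>\<^bsub>N\<^esub> y) = f x \<oplus>\<^bsub>R\<^esub> f y) \<and>
     (\<forall>r\<in>carrier R. \<forall>x\<in>carrier N. f (r \<odot>\<^bsub>N\<^esub> x) = r \<otimes>\<^bsub>R\<^esub> f x)"

definition dual :: "('r, 'a) ring_scheme \<Rightarrow> ('r, 'n, 'b) module_scheme \<Rightarrow> ('r, 'n \<Rightarrow> 'r) module" where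
  "dual R N =
     \<lparr>carrier = {f. linear_form R N f},
      monoid.mult = (\<lambda>f g. undefined), monoid.one = undefined,
      ring.zero = (\<lambda>x\<in>carrier N. \<zero>\<^bsub>R\<^esub>),
      ring.add = (\<lambda>f g. \<lambda>x\<in>carrier N. f x \<oplus>\<^bsub>R\<^esub> g x),
      module.smult = (\<lambda>r f. \<lambda>x\<in>carrier N. r \<otimes>\<^bsub>R\<^esub> f x)\<rparr>"

definition tuples :: "('d, 'b) partial_object_scheme \<Rightarrow> nat \<Rightarrow> 'd list set" where
  "tuples D s = {xs. length xs = s \<and> set xs \<subseteq> carrier D}"

definition alt_multilinear ::
  "('r, 'a) ring_scheme \<Rightarrow> ('r, 'd, 'b) module_scheme \<Rightarrow> nat \<Rightarrow> ('d list \<Rightarrow> 'r) \<Rightarrow> bool" where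
  "alt_multilinear R D s \<Phi> \<longleftrightarrow>
     \<Phi> \<in> tuples D s \<rightarrow> carrier R \<and> \<Phi> \<in> extensional (tuples D s) \<and>
     (\<forall>xs\<in>tuples D s. \<forall>i<s. \<forall>y\<in>carrier D.
        \<Phi> (xs[i := (xs!i) \<oplus>\<^bsub>D\<^esub> y]) = \<Phi> xs \<oplus>\<^bsub>R\<^esub> \<Phi> (xs[i := y])) \<and>
     (\<forall>xs\<in>tuples D s. \<forall>i<s. \<forall>r\<in>carrier R.
        \<Phi> (xs[i := r \<odot>\<^bsub>D\<^esub> (xs!i)]) = r \<otimes>\<^bsub>R\<^esub> \<Phi> xs) \<and>
     (\<forall>xs\<in>tuples D s. \<forall>i<s. \<forall>j<s. i \<noteq> j \<and> xs!i = xs!j \<longrightarrow> \<Phi> xs = \<zero>\<^bsub>R\<^esub>)"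

text \<open>The module Hom_R(\<And>^s_R D, R), realised (by the universal property of the
  exterior power) as the module of alternating R-multilinear maps D^s \<rightarrow> R.\<close>
definition alt_dual :: "('r, 'a) ring_scheme \<Rightarrow> ('r, 'd, 'b) module_scheme \<Rightarrow> nat \<Rightarrow> ('r, 'd list \<Rightarrow> 'r) module" where
  "alt_dual R D s =
     \<lparr>carrier = {\<Phi>. alt_multilinear R D s \<Phi>},
      monoid.mult = (\<lambda>f g. undefined), monoid.one = undefined,
      ring.zero = (\<lambda>xs\<in>tuples D s. \<zero>\<^bsub>R\<^esub>),
      ring.add = (\<lambda>f g. \<lambda>xs\<in>tuples D s. f xs \<oplus>\<^bsub>R\<^esub> g xs),
      module.smult = (\<lambda>r f. \<lambda>xs\<in>tuples D s. r \<otimes>\<^bsub>R\<^esub> f xs)\<rparr>"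

text \<open>Exterior bidual  \<Inter>^s_R N = (\<And>^s_R N^*)^*.\<close>
definition ext_bidual :: "('r, 'a) ring_scheme \<Rightarrow> ('r, 'n, 'b) module_scheme \<Rightarrow> nat \<Rightarrow> ('r, ('n \<Rightarrow> 'r) list \<Rightarrow> 'r) module" where
  "ext_bidual R N s = alt_dual R (dual R N) s"

definition ring_det :: "('r, 'a) ring_scheme \<Rightarrow> nat \<Rightarrow> (nat \<Rightarrow> nat \<Rightarrow> 'r) \<Rightarrow> 'r" where
  "ring_det R s m =
     (\<Oplus>\<^bsub>R\<^esub> \<sigma>\<in>{\<sigma>. \<sigma> permutes {..<s}}.
        [sign \<sigma>] \<cdot>\<^bsub>R\<^esub> (\<Otimes>\<^bsub>R\<^esub> i\<in>{..<s}. m i (\<sigma> i)))"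

definition wedge_to_bidual :: "('r, 'a) ring_scheme \<Rightarrow> ('r, 'n, 'b) module_scheme \<Rightarrow> 'n list \<Rightarrow> (('n \<Rightarrow> 'r) list \<Rightarrow> 'r)" where
  "wedge_to_bidual R N xs =
     (\<lambda>\<phi>s\<in>tuples (dual R N) (length xs). ring_det R (length xs) (\<lambda>i j. (\<phi>s!i) (xs!j)))"

definition eval_bidual :: "('r, 'a) ring_scheme \<Rightarrow> ('r, 'n, 'b) module_scheme \<Rightarrow> 'n \<Rightarrow> (('n \<Rightarrow> 'r) \<Rightarrow> 'r)" where
  "eval_bidual R N x = (\<lambda>\<phi>\<in>carrier (dual R N). \<phi> x)"

text \<open>Lift of an element of Z[G/H] to Z[G]: the coefficient of a coset is put on a
  fixed representative. On H-invariants this realises the Z[G/H]-action.\<close>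
definition quot_lift :: "('g, 'z) monoid_scheme \<Rightarrow> 'g set \<Rightarrow> ('g set \<Rightarrow> int) \<Rightarrow> ('g \<Rightarrow> int)" where
  "quot_lift G H f = (\<lambda>g. if g \<in> carrier G \<and> g = (SOME k. k \<in> H #>\<^bsub>G\<^esub> g)
                         then f (H #>\<^bsub>G\<^esub> g) else 0)"

definition invariants :: "('g, 'z) monoid_scheme \<Rightarrow> 'g set \<Rightarrow> ('g \<Rightarrow> int, 'n) module \<Rightarrow> ('g set \<Rightarrow> int, 'n) module" where
  "invariants G H N =
     \<lparr>carrier = {x \<in> carrier N. \<forall>h\<in>H. gr_elem G h \<odot>\<^bsub>N\<^esub> x = x},
      monoid.mult = monoid.mult N, monoid.one = monoid.one N, ring.zero = ring.zero N, ring.add = ring.add N,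
      module.smult = (\<lambda>f x. quot_lift G H f \<odot>\<^bsub>N\<^esub> x)\<rparr>"

definition fin_gen :: "('r, 'a) ring_scheme \<Rightarrow> ('r, 'n, 'b) module_scheme \<Rightarrow> bool" where
  "fin_gen R M \<longleftrightarrow> (\<exists>A. finite A \<and> A \<subseteq> carrier M \<and>
      (\<forall>x\<in>carrier M. \<exists>c. c \<in> A \<rightarrow> carrier R \<and> x = (\<Oplus>\<^bsub>M\<^esub> a\<in>A. c a \<odot>\<^bsub>M\<^esub> a)))"

definition module_iso :: "('r, 'a) ring_scheme \<Rightarrow> ('r, 'm, 'b) module_scheme \<Rightarrow> ('r, 'n, 'c) module_scheme \<Rightarrow> ('m \<Rightarrow> 'n) \<Rightarrow> bool" where
  "module_iso R A B \<Phi> \<longleftrightarrow>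
     bij_betw \<Phi> (carrier A) (carrier B) \<and>
     (\<forall>x\<in>carrier A. \<forall>y\<in>carrier A. \<Phi> (x \<oplus>\<^bsub>A\<^esub> y) = \<Phi> x \<oplus>\<^bsub>B\<^esub> \<Phi> y) \<and>
     (\<forall>r\<in>carrier R. \<forall>x\<in>carrier A. \<Phi> (r \<odot>\<^bsub>A\<^esub> x) = r \<odot>\<^bsub>B\<^esub> \<Phi> x)"

end

theory Submission
  imports Defs "HOL-Library.Function_Algebras"
begin

text \<open>Pulling back along \<open>G \<rightarrow> G/H\<close> identifies \<open>\<int>[G/H]\<close> with the \<open>H\<close>-invariants of \<open>\<int>[G]\<close>; this
  identification \<open>\<iota>\<close> is \<open>\<int>[G/H]\<close>-linear but multiplicative only up to \<open>|H|\<close>. With \<open>Y = (M\<^sup>*\<^sup>*)\<^sup>H\<close>,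
  the maps \<open>down_form: M\<^sup>* \<rightarrow> Y\<^sup>*\<close>, \<open>\<phi> \<mapsto> (y \<mapsto> \<iota>\<^sup>-\<^sup>1(y \<phi>))\<close>, and \<open>up_form: Y\<^sup>* \<rightarrow> M\<^sup>*\<close>,
  \<open>\<chi> \<mapsto> (x \<mapsto> \<iota>(\<chi>(N\<^sub>H x)))\<close>,
  compose to multiplication by \<open>N\<^sub>H\<close> on \<open>M\<^sup>*\<close> and by \<open>|H|\<close> on \<open>Y\<^sup>*\<close>. The second identity needs \<open>M\<close> finitely
  generated: rationally \<open>M\<close> is reflexive, so every element of \<open>M\<^sup>*\<^sup>*\<close> has a nonzero multiple in the image
  of \<open>M\<close>.

  The isomorphism sends \<open>\<Psi>\<close> to \<open>\<iota> \<circ> \<Psi>\<close> composed with \<open>down_form\<close> in every argument. It is injective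
  since precomposing with \<open>up_form\<close> multiplies by \<open>|H|\<^sup>s\<close>, and surjective since an \<open>H\<close>-invariant
  alternating form, evaluated on \<open>k\<close> arguments from the image of \<open>up_form\<close>, is divisible by
  \<open>|H|\<^sup>k\<close>. On decomposable elements the determinant, a sum of products of \<open>s\<close> entries, acquires the
  factor \<open>|H|\<^sup>s\<^sup>-\<^sup>1\<close>.\<close>

section \<open>Integral group rings\<close>

lemma group_ring_carrier_iff: "f \<in> carrier (group_ring G) \<longleftrightarrow> (\<forall>x. x \<notin> carrier G \<longrightarrow> f x = 0)"
  by (simp add: group_ring_def)

lemma group_ring_add: "f \<oplus>\<^bsub>group_ring G\<^esub> k = (\<lambda>x. f x + k x)"
  by (simp add: group_ring_def)

lemma group_ring_mult: "f \<otimes>\<^bsub>group_ring G\<^esub> k =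
   (\<lambda>x. if x \<in> carrier G then (\<Sum>y\<in>carrier G. f y * k (inv\<^bsub>G\<^esub> y \<otimes>\<^bsub>G\<^esub> x)) else 0)"
  by (simp add: group_ring_def)

lemma group_ring_zero: "\<zero>\<^bsub>group_ring G\<^esub> = (\<lambda>x. 0)"
  by (simp add: group_ring_def)

lemma group_ring_one: "\<one>\<^bsub>group_ring G\<^esub> = (\<lambda>x. if x = \<one>\<^bsub>G\<^esub> then 1 else 0)"
  by (simp add: group_ring_def)

lemma (in group) sum_left_translate:
  assumes "y \<in> carrier G"
  shows "(\<Sum>w\<in>carrier G. F w) = (\<Sum>z\<in>carrier G. F (y \<otimes> z))"
  by (rule sum.reindex_bij_witness[where j="\<lambda>w. inv y \<otimes> w" and i="\<lambda>z. y \<otimes> z"])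
     (auto simp: assms m_assoc[symmetric])

lemma (in group) group_ring_mult_assoc:
  "(f \<otimes>\<^bsub>group_ring G\<^esub> g) \<otimes>\<^bsub>group_ring G\<^esub> h = f \<otimes>\<^bsub>group_ring G\<^esub> (g \<otimes>\<^bsub>group_ring G\<^esub> h)"
proof
  fix x
  show "((f \<otimes>\<^bsub>group_ring G\<^esub> g) \<otimes>\<^bsub>group_ring G\<^esub> h) x = (f \<otimes>\<^bsub>group_ring G\<^esub> (g \<otimes>\<^bsub>group_ring G\<^esub> h)) x"
  proof (cases "x \<in> carrier G")
    case x: True
    have "((f \<otimes>\<^bsub>group_ring G\<^esub> g) \<otimes>\<^bsub>group_ring G\<^esub> h) x
        = (\<Sum>w\<in>carrier G. (\<Sum>y\<in>carrier G. f y * g (inv y \<otimes> w)) * h (inv w \<otimes> x))"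
      using x by (simp add: group_ring_mult)
    also have "\<dots> = (\<Sum>y\<in>carrier G. \<Sum>w\<in>carrier G. f y * g (inv y \<otimes> w) * h (inv w \<otimes> x))"
      by (simp add: sum_distrib_right, rule sum.swap)
    also have "\<dots> = (\<Sum>y\<in>carrier G. \<Sum>z\<in>carrier G. f y * g (inv y \<otimes> (y \<otimes> z)) * h (inv (y \<otimes> z) \<otimes> x))"
      by (intro sum.cong refl sum_left_translate)
    also have "\<dots> = (\<Sum>y\<in>carrier G. f y * (\<Sum>z\<in>carrier G. g z * h (inv z \<otimes> (inv y \<otimes> x))))"
      using x by (intro sum.cong refl)
        (simp add: sum_distrib_left mult.assoc m_assoc[symmetric] inv_mult_group)
    also have "\<dots> = (f \<otimes>\<^bsub>group_ring G\<^esub> (g \<otimes>\<^bsub>group_ring G\<^esub> h)) x"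
      using x by (simp add: group_ring_mult)
    finally show ?thesis .
  qed (simp add: group_ring_mult)
qed

lemma (in comm_group) group_ring_mult_comm:
  "f \<otimes>\<^bsub>group_ring G\<^esub> g = g \<otimes>\<^bsub>group_ring G\<^esub> f"
proof
  fix x
  show "(f \<otimes>\<^bsub>group_ring G\<^esub> g) x = (g \<otimes>\<^bsub>group_ring G\<^esub> f) x"
  proof (cases "x \<in> carrier G")
    case x: True
    have cancel: "x \<otimes> inv (inv y \<otimes> x) = y" "inv (inv y \<otimes> x) \<otimes> x = y" "inv (x \<otimes> inv y) \<otimes> x = y"
      if "y \<in> carrier G" for y
      using that x by (simp_all add: inv_mult_group m_assoc m_lcomm m_assoc[symmetric])
    have "(\<Sum>y\<in>carrier G. f y * g (inv y \<otimes> x)) = (\<Sum>z\<in>carrier G. g z * f (inv z \<otimes> x))"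
      by (rule sum.reindex_bij_witness[where i="\<lambda>z. x \<otimes> inv z" and j="\<lambda>y. inv y \<otimes> x"])
        (simp_all add: x cancel)
    then show ?thesis using x by (simp add: group_ring_mult)
  qed (simp add: group_ring_mult)
qed

lemma (in group) group_ring_one_mult:
  assumes "finite (carrier G)" and "f \<in> carrier (group_ring G)"
  shows "\<one>\<^bsub>group_ring G\<^esub> \<otimes>\<^bsub>group_ring G\<^esub> f = f"
proof
  fix x
  show "(\<one>\<^bsub>group_ring G\<^esub> \<otimes>\<^bsub>group_ring G\<^esub> f) x = f x"
  proof (cases "x \<in> carrier G")
    case True
    have "(\<Sum>y\<in>carrier G. (if y = \<one> then 1 else 0) * f (inv y \<otimes> x))
        = (\<Sum>y\<in>carrier G. if y = \<one> then f (inv y \<otimes> x) else 0)"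
      by (rule sum.cong) auto
    also have "\<dots> = f (inv \<one> \<otimes> x)"
      using assms(1) by simp
    finally have "(\<Sum>y\<in>carrier G. (if y = \<one> then 1 else 0) * f (inv y \<otimes> x)) = f (inv \<one> \<otimes> x)" .
    then show ?thesis using True by (simp add: group_ring_mult group_ring_one)
  qed (use assms(2) in \<open>simp add: group_ring_mult group_ring_carrier_iff\<close>)
qed

lemma (in comm_group) cring_group_ring:
  assumes "finite (carrier G)"
  shows "cring (group_ring G)"
proof (rule cringI)
  show "abelian_group (group_ring G)"
    by (rule abelian_groupI)
      (auto simp: group_ring_carrier_iff group_ring_add group_ring_zero intro!: bexI[of _ "\<lambda>z. - _ z"])
  show "comm_monoid (group_ring G)"
  proof (rule comm_monoidI)
    fix f g h
    show "\<one>\<^bsub>group_ring G\<^esub> \<in> carrier (group_ring G)"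
      by (simp add: group_ring_carrier_iff group_ring_one)
    show "f \<otimes>\<^bsub>group_ring G\<^esub> g \<in> carrier (group_ring G)"
      by (simp add: group_ring_carrier_iff group_ring_mult)
    show "(f \<otimes>\<^bsub>group_ring G\<^esub> g) \<otimes>\<^bsub>group_ring G\<^esub> h = f \<otimes>\<^bsub>group_ring G\<^esub> (g \<otimes>\<^bsub>group_ring G\<^esub> h)"
      by (rule group_ring_mult_assoc)
    show "f \<otimes>\<^bsub>group_ring G\<^esub> g = g \<otimes>\<^bsub>group_ring G\<^esub> f"
      by (rule group_ring_mult_comm)
    show "f \<in> carrier (group_ring G) \<Longrightarrow> \<one>\<^bsub>group_ring G\<^esub> \<otimes>\<^bsub>group_ring G\<^esub> f = f"
      by (rule group_ring_one_mult[OF assms])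
  qed
  show "(f \<oplus>\<^bsub>group_ring G\<^esub> g) \<otimes>\<^bsub>group_ring G\<^esub> h
      = f \<otimes>\<^bsub>group_ring G\<^esub> h \<oplus>\<^bsub>group_ring G\<^esub> g \<otimes>\<^bsub>group_ring G\<^esub> h" for f g h
    by (auto simp: group_ring_mult group_ring_add distrib_right sum.distrib)
qed

definition int_scale :: "int \<Rightarrow> ('a \<Rightarrow> int) \<Rightarrow> 'a \<Rightarrow> int" where
  "int_scale m a = (\<lambda>x. m * a x)"

text \<open>Pointwise division; it is exact, and used, only on multiples of \<open>m\<close>.\<close>

definition int_quot :: "int \<Rightarrow> ('a \<Rightarrow> int) \<Rightarrow> 'a \<Rightarrow> int" where
  "int_quot m a = (\<lambda>x. a x div m)"

lemma int_quot_int_scale: "m \<noteq> 0 \<Longrightarrow> int_quot m (int_scale m a) = a"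
  by (simp add: int_quot_def int_scale_def)

lemma int_scale_1 [simp]: "int_scale 1 a = a"
  by (simp add: int_scale_def)

lemma int_scale_int_scale: "int_scale m (int_scale n a) = int_scale (m * n) a"
  by (simp add: int_scale_def mult.assoc)

lemma int_scale_cancel: "m \<noteq> 0 \<Longrightarrow> int_scale m a = int_scale m b \<Longrightarrow> a = b"
  by (auto simp: int_scale_def fun_eq_iff)

lemma int_scale_carrier: "a \<in> carrier (group_ring G) \<Longrightarrow> int_scale m a \<in> carrier (group_ring G)"
  by (simp add: int_scale_def group_ring_carrier_iff)

lemma int_scale_add:
  "int_scale m a \<oplus>\<^bsub>group_ring G\<^esub> int_scale m b = int_scale m (a \<oplus>\<^bsub>group_ring G\<^esub> b)"
  by (simp add: int_scale_def group_ring_add distrib_left)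

lemma int_scale_mult_left:
  "int_scale m a \<otimes>\<^bsub>group_ring G\<^esub> b = int_scale m (a \<otimes>\<^bsub>group_ring G\<^esub> b)"
  by (auto simp: int_scale_def group_ring_mult sum_distrib_left mult.assoc)

lemma int_scale_mult_right:
  "a \<otimes>\<^bsub>group_ring G\<^esub> int_scale m b = int_scale m (a \<otimes>\<^bsub>group_ring G\<^esub> b)"
  by (auto simp: int_scale_def group_ring_mult sum_distrib_left mult.left_commute)

lemma group_ring_finsum:
  assumes "cring (group_ring G)" and "finite A" and "F \<in> A \<rightarrow> carrier (group_ring G)"
  shows "finsum (group_ring G) F A = (\<lambda>x. \<Sum>a\<in>A. F a x)"
  using assms(2,3)
proof (induction A rule: finite_induct)
  case empty
  interpret cring "group_ring G" by (rule assms(1))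
  show ?case by (simp add: group_ring_zero)
next
  case (insert a A)
  interpret cring "group_ring G" by (rule assms(1))
  have "finsum (group_ring G) F (insert a A) = F a \<oplus>\<^bsub>group_ring G\<^esub> finsum (group_ring G) F A"
    using insert by (intro finsum_insert) auto
  then show ?case using insert by (simp add: group_ring_add)
qed

lemma group_ring_a_inv:
  assumes "cring (group_ring G)" and "f \<in> carrier (group_ring G)"
  shows "\<ominus>\<^bsub>group_ring G\<^esub> f = int_scale (-1) f"
proof -
  interpret cring "group_ring G" by (rule assms(1))
  have "int_scale (-1) f \<oplus>\<^bsub>group_ring G\<^esub> f = \<zero>\<^bsub>group_ring G\<^esub>"
    by (simp add: int_scale_def group_ring_add group_ring_zero)
  then show ?thesis using assms(2) int_scale_carrier[OF assms(2)] by (intro minus_equality)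
qed

lemma add_pow_nat_Suc: "[Suc n] \<cdot>\<^bsub>A\<^esub> f = [n] \<cdot>\<^bsub>A\<^esub> f \<oplus>\<^bsub>A\<^esub> f"
  by (simp add: add_pow_def nat_pow_def)

lemma add_pow_nat_0: "[(0::nat)] \<cdot>\<^bsub>A\<^esub> f = \<zero>\<^bsub>A\<^esub>"
  by (simp add: add_pow_def nat_pow_def)

lemma group_ring_add_pow_nat: "[(n::nat)] \<cdot>\<^bsub>group_ring G\<^esub> f = int_scale (int n) f"
  by (induction n) (simp_all add: add_pow_nat_0 add_pow_nat_Suc group_ring_zero group_ring_add
      int_scale_def distrib_right add.commute)

lemma group_ring_add_pow_int:
  assumes "cring (group_ring G)" and "f \<in> carrier (group_ring G)"
  shows "[(k::int)] \<cdot>\<^bsub>group_ring G\<^esub> f = int_scale k f"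
proof -
  have nat_pow: "pow (add_monoid (group_ring G)) f n = int_scale (int n) f" for n :: nat
    using group_ring_add_pow_nat[where n=n] by (simp add: add_pow_def)
  have "[k] \<cdot>\<^bsub>group_ring G\<^esub> f = pow (add_monoid (group_ring G)) f k"
    by (simp only: add_pow_def)
  also have "\<dots> = (if k < 0 then \<ominus>\<^bsub>group_ring G\<^esub> int_scale (int (nat (- k))) f
                    else int_scale (int (nat k)) f)"
    by (simp only: int_pow_def2 nat_pow a_inv_def)
  also have "\<dots> = int_scale k f"
    using group_ring_a_inv[OF assms(1) int_scale_carrier[OF assms(2)]] by (simp add: int_scale_int_scale)
  finally show ?thesis .
qed

lemma ring_det_0:
  assumes "cring R"
  shows "ring_det R 0 m = \<one>\<^bsub>R\<^esub>"
proof -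
  interpret cring R by (rule assms)
  show ?thesis by (simp add: ring_det_def)
qed

lemma ring_det_cong:
  assumes "cring R" and eq: "\<And>i j. i < s \<Longrightarrow> j < s \<Longrightarrow> m i j = m' i j"
    and closed: "\<And>i j. i < s \<Longrightarrow> j < s \<Longrightarrow> m' i j \<in> carrier R"
  shows "ring_det R s m = ring_det R s m'"
proof -
  interpret cring R by (rule assms(1))
  have fp: "finprod R (\<lambda>i. m i (\<sigma> i)) {..<s} = finprod R (\<lambda>i. m' i (\<sigma> i)) {..<s}"
    and fc: "finprod R (\<lambda>i. m' i (\<sigma> i)) {..<s} \<in> carrier R"
    if \<sigma>: "\<sigma> permutes {..<s}" for \<sigma>
  proof -
    have pi: "(\<lambda>i. m' i (\<sigma> i)) \<in> {..<s} \<rightarrow> carrier R" using closed permutes_in_image[OF \<sigma>] by auto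
    show "finprod R (\<lambda>i. m i (\<sigma> i)) {..<s} = finprod R (\<lambda>i. m' i (\<sigma> i)) {..<s}"
      by (rule finprod_cong'[OF refl pi]) (use eq permutes_in_image[OF \<sigma>] in auto)
    show "finprod R (\<lambda>i. m' i (\<sigma> i)) {..<s} \<in> carrier R" by (rule finprod_closed[OF pi])
  qed
  show ?thesis unfolding ring_det_def
    by (rule finsum_cong'[OF refl]) (auto simp: fp fc)
qed

lemma group_ring_det:
  assumes "cring (group_ring G)"
    and closed: "\<And>i j. i < s \<Longrightarrow> j < s \<Longrightarrow> m i j \<in> carrier (group_ring G)"
  shows "ring_det (group_ring G) s m =
    (\<lambda>x. \<Sum>\<sigma>\<in>{\<sigma>. \<sigma> permutes {..<s}}. sign \<sigma> * finprod (group_ring G) (\<lambda>i. m i (\<sigma> i)) {..<s} x)"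
proof -
  interpret cring "group_ring G" by (rule assms(1))
  define P where "P = {\<sigma>. \<sigma> permutes {..<s}}"
  have "finite P" unfolding P_def by (rule finite_permutations) simp
  have fpc: "finprod (group_ring G) (\<lambda>i. m i (\<sigma> i)) {..<s} \<in> carrier (group_ring G)" if "\<sigma> \<in> P" for \<sigma>
    by (rule finprod_closed) (use that closed permutes_in_image[of \<sigma> "{..<s}"] in \<open>auto simp: P_def\<close>)
  have "ring_det (group_ring G) s m
      = finsum (group_ring G) (\<lambda>\<sigma>. int_scale (sign \<sigma>) (finprod (group_ring G) (\<lambda>i. m i (\<sigma> i)) {..<s})) P"
    unfolding ring_det_def P_def[symmetric]
    by (rule finsum_cong') (simp_all add: fpc group_ring_add_pow_int[OF assms(1)] int_scale_carrier Pi_def)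
  also have "\<dots> = (\<lambda>x. \<Sum>\<sigma>\<in>P. int_scale (sign \<sigma>) (finprod (group_ring G) (\<lambda>i. m i (\<sigma> i)) {..<s}) x)"
    by (rule group_ring_finsum[OF assms(1) \<open>finite P\<close>]) (simp add: fpc int_scale_carrier Pi_def)
  finally show ?thesis by (simp add: P_def int_scale_def)
qed

lemma group_ring_int_scale_one_pow:
  assumes "cring (group_ring G)" and "f \<in> carrier (group_ring G)"
  shows "int_scale m \<one>\<^bsub>group_ring G\<^esub> [^]\<^bsub>group_ring G\<^esub> (n::nat) \<otimes>\<^bsub>group_ring G\<^esub> f = int_scale (m ^ n) f"
  using assms(2)
proof (induction n arbitrary: f)
  interpret cring "group_ring G" by (rule assms(1))
  case 0 then show ?case by simp
next
  interpret cring "group_ring G" by (rule assms(1))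
  case (Suc n)
  have c: "int_scale m \<one>\<^bsub>group_ring G\<^esub> \<in> carrier (group_ring G)" by (simp add: int_scale_carrier)
  have "int_scale m \<one>\<^bsub>group_ring G\<^esub> [^]\<^bsub>group_ring G\<^esub> Suc n \<otimes>\<^bsub>group_ring G\<^esub> f
      = int_scale m \<one>\<^bsub>group_ring G\<^esub> [^]\<^bsub>group_ring G\<^esub> n \<otimes>\<^bsub>group_ring G\<^esub> int_scale m f"
    using Suc.prems c by (simp add: m_assoc int_scale_mult_left)
  also have "\<dots> = int_scale (m ^ Suc n) f"
    using Suc.IH[OF int_scale_carrier[OF Suc.prems]] by (simp add: int_scale_int_scale mult.commute)
  finally show ?case .
qed

lemma gr_elem_carrier: "gr_elem G h \<in> carrier (group_ring G)"
  by (simp add: group_ring_carrier_iff gr_elem_def)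

lemma (in group) gr_elem_mult:
  assumes "finite (carrier G)" and "u \<in> carrier G"
  shows "gr_elem G u \<otimes>\<^bsub>group_ring G\<^esub> a = (\<lambda>x. if x \<in> carrier G then a (inv u \<otimes> x) else 0)"
proof
  fix x
  have "(\<Sum>y\<in>carrier G. gr_elem G u y * a (inv y \<otimes> x)) = (\<Sum>y\<in>carrier G. if y = u then a (inv y \<otimes> x) else 0)"
    by (rule sum.cong) (auto simp: gr_elem_def)
  also have "\<dots> = a (inv u \<otimes> x)" using assms by simp
  finally show "(gr_elem G u \<otimes>\<^bsub>group_ring G\<^esub> a) x = (if x \<in> carrier G then a (inv u \<otimes> x) else 0)"
    by (simp add: group_ring_mult)
qed

section \<open>Pullback along \<open>G \<rightarrow> G/H\<close>\<close>

definition coset_rep :: "'a set \<Rightarrow> 'a" where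
  "coset_rep C = (SOME k. k \<in> C)"

definition coset_pullback :: "('g, 'z) monoid_scheme \<Rightarrow> 'g set \<Rightarrow> ('g set \<Rightarrow> int) \<Rightarrow> 'g \<Rightarrow> int" where
  "coset_pullback G H f = (\<lambda>g. if g \<in> carrier G then f (H #>\<^bsub>G\<^esub> g) else 0)"

definition coset_descend :: "('g, 'z) monoid_scheme \<Rightarrow> 'g set \<Rightarrow> ('g \<Rightarrow> int) \<Rightarrow> 'g set \<Rightarrow> int" where
  "coset_descend G H a = (\<lambda>C. if C \<in> rcosets\<^bsub>G\<^esub> H then a (coset_rep C) else 0)"

definition coset_pushforward :: "('g, 'z) monoid_scheme \<Rightarrow> 'g set \<Rightarrow> ('g \<Rightarrow> int) \<Rightarrow> 'g set \<Rightarrow> int" where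
  "coset_pushforward G H r = (\<lambda>C. if C \<in> rcosets\<^bsub>G\<^esub> H then (\<Sum>g\<in>C. r g) else 0)"

definition invariant_elem :: "('g, 'z) monoid_scheme \<Rightarrow> 'g set \<Rightarrow> ('g \<Rightarrow> int) \<Rightarrow> bool" where
  "invariant_elem G H a \<longleftrightarrow>
     a \<in> carrier (group_ring G) \<and> (\<forall>h\<in>H. gr_elem G h \<otimes>\<^bsub>group_ring G\<^esub> a = a)"

locale quotient_group_ring = comm_group G for G :: "('g, 'z) monoid_scheme" (structure) +
  fixes H :: "'g set"
  assumes finite_carrier: "finite (carrier G)" and subgroup_H: "subgroup H G"
begin

abbreviation "R \<equiv> group_ring G"
abbreviation "S \<equiv> group_ring (G Mod H)"
abbreviation "N \<equiv> norm_elem G H"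
abbreviation "q \<equiv> quot_lift G H"
abbreviation "\<iota> \<equiv> coset_pullback G H"
abbreviation "\<kappa> \<equiv> coset_descend G H"
abbreviation "\<pi> \<equiv> coset_pushforward G H"

lemma H_subset: "H \<subseteq> carrier G"
  using subgroup_H subgroup.subset by blast

lemma finite_H: "finite H"
  using H_subset finite_carrier finite_subset by blast

lemma card_H_pos: "card H > 0"
  using finite_H subgroup.one_closed[OF subgroup_H] card_gt_0_iff by blast

lemma normal_H: "H \<lhd> G"
  using subgroup_H normal_iff_subgroup by blast

lemma carrier_Mod: "carrier (G Mod H) = rcosets H"
  by (simp add: FactGroup_def)

lemma rcoset_in_rcosets: "g \<in> carrier G \<Longrightarrow> H #> g \<in> rcosets H"
  using H_subset rcosetsI by blast

lemma rcoset_self: "g \<in> carrier G \<Longrightarrow> g \<in> H #> g"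
  using subgroup_H rcos_self by blast

lemma rcoset_eq: "g \<in> carrier G \<Longrightarrow> k \<in> H #> g \<Longrightarrow> H #> k = H #> g"
  using repr_independence subgroup_H by metis

lemma rcosets_subset: "C \<in> rcosets H \<Longrightarrow> C \<subseteq> carrier G"
  using subgroup.rcosets_carrier[OF subgroup_H is_group] by blast

lemma finite_rcosets: "finite (rcosets H)"
  by (rule finite_subset[of _ "Pow (carrier G)"]) (auto dest: rcosets_subset simp: finite_carrier)

lemma rcosets_obtain: "C \<in> rcosets H \<Longrightarrow> \<exists>g\<in>carrier G. C = H #> g"
  by (auto simp: RCOSETS_def)

lemma rcoset_of_member: "C \<in> rcosets H \<Longrightarrow> y \<in> C \<Longrightarrow> H #> y = C"
  by (metis rcoset_eq rcosets_obtain)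

lemma coset_rep_in: "C \<in> rcosets H \<Longrightarrow> coset_rep C \<in> C"
  unfolding coset_rep_def by (metis rcosets_obtain rcoset_self someI)

lemma coset_rep_carrier: "C \<in> rcosets H \<Longrightarrow> coset_rep C \<in> carrier G"
  using coset_rep_in rcosets_subset by blast

lemma rcoset_coset_rep: "C \<in> rcosets H \<Longrightarrow> H #> coset_rep C = C"
  by (rule rcoset_of_member[OF _ coset_rep_in])

lemma quot_lift_on_coset:
  assumes "C \<in> rcosets H" and "y \<in> C"
  shows "q f y = (if y = coset_rep C then f C else 0)"
proof -
  have "y \<in> carrier G" using assms rcosets_subset by blast
  then show ?thesis using rcoset_of_member[OF assms] by (auto simp: quot_lift_def coset_rep_def)
qed

lemma quot_lift_carrier: "q f \<in> carrier R"
  by (simp add: group_ring_carrier_iff quot_lift_def)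

lemma sum_over_rcosets: "(\<Sum>y\<in>carrier G. F y) = (\<Sum>C\<in>rcosets H. \<Sum>y\<in>C. F y)"
proof -
  have "\<forall>C\<in>rcosets H. finite C"
    using finite_carrier rcosets_subset finite_subset by blast
  moreover have "\<forall>A\<in>rcosets H. \<forall>B\<in>rcosets H. A \<noteq> B \<longrightarrow> A \<inter> B = {}"
    using rcos_disjoint[OF subgroup_H] by (simp add: pairwise_def disjnt_def)
  ultimately show ?thesis
    using sum.Union_disjoint[of "rcosets H" F] rcosets_part_G[OF subgroup_H] by simp
qed

lemma sum_subgroup_rcoset:
  assumes x: "x \<in> carrier G"
  shows "(\<Sum>h\<in>H. F (inv h \<otimes> x)) = (\<Sum>k\<in>H #> x. F k)"
proof (rule sum.reindex_bij_witness[where i="\<lambda>k. inv (k \<otimes> inv x)" and j="\<lambda>h. inv h \<otimes> x"])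
  fix h assume h: "h \<in> H"
  then have hG: "h \<in> carrier G" using H_subset by blast
  show "inv (inv h \<otimes> x \<otimes> inv x) = h" using x hG by (simp add: m_assoc)
  show "inv h \<otimes> x \<in> H #> x"
    by (rule rcosI[OF subgroup.m_inv_closed[OF subgroup_H h] H_subset x])
  show "F (inv h \<otimes> x) = F (inv h \<otimes> x)" ..
next
  fix k assume k: "k \<in> H #> x"
  have kG: "k \<in> carrier G" using k r_coset_subset_G[OF H_subset x] by blast
  show "inv (inv (k \<otimes> inv x)) \<otimes> x = k" using x kG by (simp add: m_assoc)
  show "inv (k \<otimes> inv x) \<in> H"
    by (rule subgroup.m_inv_closed[OF subgroup_H subgroup.rcos_module_imp[OF subgroup_H is_group x k]])
qed

lemma sum_quot_lift: "(\<Sum>y\<in>carrier G. q f y * T y) = (\<Sum>C\<in>rcosets H. f C * T (coset_rep C))"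
proof -
  have "(\<Sum>y\<in>C. q f y * T y) = f C * T (coset_rep C)" if C: "C \<in> rcosets H" for C
  proof -
    have "finite C" using C rcosets_subset finite_carrier finite_subset by blast
    have "(\<Sum>y\<in>C. q f y * T y) = (\<Sum>y\<in>C. if y = coset_rep C then f C * T y else 0)"
      by (rule sum.cong) (auto simp: quot_lift_on_coset[OF C])
    also have "\<dots> = f C * T (coset_rep C)" using \<open>finite C\<close> coset_rep_in[OF C] by simp
    finally show ?thesis .
  qed
  then show ?thesis by (simp add: sum_over_rcosets)
qed

lemma norm_elem_carrier: "N \<in> carrier R"
  by (simp add: group_ring_carrier_iff norm_elem_def)

lemma norm_elem_mult: "N \<otimes>\<^bsub>R\<^esub> a = (\<lambda>x. if x \<in> carrier G then (\<Sum>h\<in>H. a (inv h \<otimes> x)) else 0)"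
proof
  fix x
  have "(\<Sum>y\<in>carrier G. N y * a (inv y \<otimes> x)) = (\<Sum>y\<in>carrier G. if y \<in> H then a (inv y \<otimes> x) else 0)"
    by (rule sum.cong) (auto simp: norm_elem_def)
  also have "\<dots> = (\<Sum>h\<in>H. a (inv h \<otimes> x))"
    using H_subset by (simp add: sum.inter_restrict[OF finite_carrier, symmetric] Int_absorb1)
  finally show "(N \<otimes>\<^bsub>R\<^esub> a) x = (if x \<in> carrier G then (\<Sum>h\<in>H. a (inv h \<otimes> x)) else 0)"
    by (simp add: group_ring_mult)
qed

lemma invariant_elem_iff:
  "invariant_elem G H a \<longleftrightarrow> a \<in> carrier R \<and> (\<forall>h\<in>H. \<forall>x\<in>carrier G. a (inv h \<otimes> x) = a x)"
proof -
  have "gr_elem G h \<otimes>\<^bsub>R\<^esub> a = a \<longleftrightarrow> (\<forall>x\<in>carrier G. a (inv h \<otimes> x) = a x)"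
    if "h \<in> H" and "a \<in> carrier R" for h
  proof -
    have "h \<in> carrier G" using that H_subset by blast
    then show ?thesis using that(2) by (auto simp: gr_elem_mult[OF finite_carrier] fun_eq_iff group_ring_carrier_iff)
  qed
  then show ?thesis unfolding invariant_elem_def by blast
qed

lemma invariant_elem_carrier: "invariant_elem G H a \<Longrightarrow> a \<in> carrier R"
  by (simp add: invariant_elem_def)

lemma invariant_elem_rcoset_const:
  assumes a: "invariant_elem G H a" and x: "x \<in> carrier G" and k: "k \<in> H #> x"
  shows "a k = a x"
proof -
  obtain h where h: "h \<in> H" "k = h \<otimes> x" using k unfolding r_coset_def by blast
  have "a (inv (inv h) \<otimes> x) = a x"
    using a x subgroup.m_inv_closed[OF subgroup_H h(1)] by (simp add: invariant_elem_iff)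
  then show ?thesis using h H_subset by auto
qed

lemma pullback_carrier: "\<iota> f \<in> carrier R"
  by (simp add: group_ring_carrier_iff coset_pullback_def)

lemma descend_carrier: "\<kappa> a \<in> carrier S"
  by (simp add: group_ring_carrier_iff coset_descend_def carrier_Mod)

lemma pushforward_carrier: "\<pi> r \<in> carrier S"
  by (simp add: group_ring_carrier_iff coset_pushforward_def carrier_Mod)

lemma pullback_add: "\<iota> (f \<oplus>\<^bsub>S\<^esub> f') = \<iota> f \<oplus>\<^bsub>R\<^esub> \<iota> f'"
  by (auto simp: coset_pullback_def group_ring_add)

lemma pullback_zero: "\<iota> \<zero>\<^bsub>S\<^esub> = \<zero>\<^bsub>R\<^esub>"
  by (auto simp: coset_pullback_def group_ring_zero)

lemma pullback_int_scale: "\<iota> (int_scale m f) = int_scale m (\<iota> f)"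
  by (auto simp: coset_pullback_def int_scale_def)

lemma descend_add: "\<kappa> (a \<oplus>\<^bsub>R\<^esub> a') = \<kappa> a \<oplus>\<^bsub>S\<^esub> \<kappa> a'"
  by (auto simp: coset_descend_def group_ring_add)

lemma descend_zero: "\<kappa> \<zero>\<^bsub>R\<^esub> = \<zero>\<^bsub>S\<^esub>"
  by (auto simp: coset_descend_def group_ring_zero)

lemma descend_int_scale: "\<kappa> (int_scale m a) = int_scale m (\<kappa> a)"
  by (auto simp: coset_descend_def int_scale_def)

lemma invariant_pullback: "invariant_elem G H (\<iota> f)"
  unfolding invariant_elem_iff
proof (intro conjI ballI pullback_carrier)
  fix h x assume h: "h \<in> H" and x: "x \<in> carrier G"
  have "inv h \<in> H" using subgroup.m_inv_closed[OF subgroup_H h] .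
  then have "H #> (inv h \<otimes> x) = H #> x" by (intro rcoset_eq[OF x] rcosI H_subset x)
  then show "\<iota> f (inv h \<otimes> x) = \<iota> f x" using x h H_subset by (auto simp: coset_pullback_def)
qed

lemma pullback_descend: "invariant_elem G H a \<Longrightarrow> \<iota> (\<kappa> a) = a"
  using coset_rep_in rcoset_in_rcosets invariant_elem_rcoset_const
  by (auto simp: fun_eq_iff coset_pullback_def coset_descend_def invariant_elem_def
      group_ring_carrier_iff)

lemma descend_pullback: "f \<in> carrier S \<Longrightarrow> \<kappa> (\<iota> f) = f"
  using coset_rep_carrier rcoset_coset_rep
  by (auto simp: fun_eq_iff coset_pullback_def coset_descend_def group_ring_carrier_iff carrier_Mod)

lemma pullback_inj: "f \<in> carrier S \<Longrightarrow> f' \<in> carrier S \<Longrightarrow> \<iota> f = \<iota> f' \<Longrightarrow> f = f'"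
  by (metis descend_pullback)

lemma cring_R: "cring R"
  using cring_group_ring finite_carrier .

lemma cring_S: "cring S"
  using comm_group.cring_group_ring[OF abelian_FactGroup[OF subgroup_H]] finite_rcosets
  by (simp add: carrier_Mod)

lemma pullback_one: "\<iota> \<one>\<^bsub>S\<^esub> = N"
proof -
  have "H #> x = H \<longleftrightarrow> x \<in> H" if "x \<in> carrier G" for x
    using rcoset_self[OF that] coset_join2[OF that subgroup_H] by auto
  then show ?thesis by (auto simp: fun_eq_iff group_ring_one coset_pullback_def norm_elem_def)
qed

lemma norm_mult_quot_lift: "N \<otimes>\<^bsub>R\<^esub> q f = \<iota> f"
proof
  fix x
  show "(N \<otimes>\<^bsub>R\<^esub> q f) x = \<iota> f x"
  proof (cases "x \<in> carrier G")
    case True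
    have "(\<Sum>h\<in>H. q f (inv h \<otimes> x)) = (\<Sum>k\<in>H #> x. q f k)" using True by (rule sum_subgroup_rcoset)
    also have "\<dots> = (\<Sum>k\<in>H #> x. if k = coset_rep (H #> x) then f (H #> x) else 0)"
      by (rule sum.cong) (simp_all add: quot_lift_on_coset[OF rcoset_in_rcosets[OF True]])
    also have "\<dots> = f (H #> x)"
      using coset_rep_in[OF rcoset_in_rcosets[OF True]] rcosets_subset[OF rcoset_in_rcosets[OF True]]
        finite_subset[OF _ finite_carrier] by simp
    finally show ?thesis using True by (simp add: norm_elem_mult coset_pullback_def)
  qed (simp add: norm_elem_mult coset_pullback_def)
qed

lemma norm_mult_invariant: "invariant_elem G H a \<Longrightarrow> N \<otimes>\<^bsub>R\<^esub> a = int_scale (card H) a"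
  by (auto simp: fun_eq_iff norm_elem_mult int_scale_def invariant_elem_iff group_ring_carrier_iff)

lemma norm_mult_pushforward: "N \<otimes>\<^bsub>R\<^esub> r = \<iota> (\<pi> r)"
  by (auto simp: fun_eq_iff norm_elem_mult coset_pullback_def coset_pushforward_def sum_subgroup_rcoset
      rcoset_in_rcosets)

lemma quot_lift_mult_pullback: "q f \<otimes>\<^bsub>R\<^esub> \<iota> f' = \<iota> (f \<otimes>\<^bsub>S\<^esub> f')"
proof
  fix x
  show "(q f \<otimes>\<^bsub>R\<^esub> \<iota> f') x = \<iota> (f \<otimes>\<^bsub>S\<^esub> f') x"
  proof (cases "x \<in> carrier G")
    case True
    have "(q f \<otimes>\<^bsub>R\<^esub> \<iota> f') x = (\<Sum>C\<in>rcosets H. f C * \<iota> f' (inv (coset_rep C) \<otimes> x))"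
      using True by (simp add: group_ring_mult sum_quot_lift)
    also have "\<dots> = (\<Sum>C\<in>rcosets H. f C * f' (inv\<^bsub>G Mod H\<^esub> C \<otimes>\<^bsub>G Mod H\<^esub> (H #> x)))"
    proof (rule sum.cong[OF refl])
      fix C assume C: "C \<in> rcosets H"
      have "inv\<^bsub>G Mod H\<^esub> C \<otimes>\<^bsub>G Mod H\<^esub> (H #> x) = set_inv C <#> (H #> x)"
        using normal.inv_FactGroup[OF normal_H] C by (simp add: carrier_Mod)
      also have "\<dots> = H #> (inv (coset_rep C) \<otimes> x)"
        using rcoset_coset_rep[OF C] coset_rep_carrier[OF C] True normal.rcos_inv[OF normal_H]
          normal.rcos_sum[OF normal_H]
        by (metis inv_closed)
      finally show "f C * \<iota> f' (inv (coset_rep C) \<otimes> x) = f C * f' (inv\<^bsub>G Mod H\<^esub> C \<otimes>\<^bsub>G Mod H\<^esub> (H #> x))"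
        using True coset_rep_carrier[OF C] by (simp add: coset_pullback_def)
    qed
    also have "\<dots> = \<iota> (f \<otimes>\<^bsub>S\<^esub> f') x"
      using True rcoset_in_rcosets by (simp add: coset_pullback_def group_ring_mult carrier_Mod)
    finally show ?thesis .
  qed (simp add: group_ring_mult coset_pullback_def)
qed

lemma pullback_mult_pushforward:
  assumes "r \<in> carrier R" and "f \<in> carrier S"
  shows "\<iota> (\<pi> r \<otimes>\<^bsub>S\<^esub> f) = r \<otimes>\<^bsub>R\<^esub> \<iota> f"
proof -
  interpret R: cring R by (rule cring_R)
  interpret S: cring S by (rule cring_S)
  have "r \<otimes>\<^bsub>R\<^esub> \<iota> f = (N \<otimes>\<^bsub>R\<^esub> r) \<otimes>\<^bsub>R\<^esub> q f"
    using assms(1) norm_elem_carrier quot_lift_carrier by (simp add: norm_mult_quot_lift[symmetric] R.m_ac)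
  also have "\<dots> = \<iota> (f \<otimes>\<^bsub>S\<^esub> \<pi> r)"
    using assms(1) quot_lift_carrier pullback_carrier
    by (simp add: norm_mult_pushforward R.m_comm quot_lift_mult_pullback)
  finally show ?thesis using assms(2) pushforward_carrier by (simp add: S.m_comm)
qed

lemma mult_invariant_eq_quot_lift:
  assumes "r \<in> carrier R" and "invariant_elem G H a"
  shows "r \<otimes>\<^bsub>R\<^esub> a = q (\<pi> r) \<otimes>\<^bsub>R\<^esub> a"
  using pullback_mult_pushforward[OF assms(1) descend_carrier] quot_lift_mult_pullback[of "\<pi> r" "\<kappa> a"]
    pullback_descend[OF assms(2)] by simp

lemma descend_quot_lift_mult:
  assumes "invariant_elem G H a"
  shows "\<kappa> (q f \<otimes>\<^bsub>R\<^esub> a) = f \<otimes>\<^bsub>S\<^esub> \<kappa> a"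
proof -
  have "q f \<otimes>\<^bsub>R\<^esub> a = \<iota> (f \<otimes>\<^bsub>S\<^esub> \<kappa> a)"
    using quot_lift_mult_pullback[of f "\<kappa> a"] pullback_descend[OF assms] by simp
  moreover have "f \<otimes>\<^bsub>S\<^esub> \<kappa> a \<in> carrier S"
    by (simp add: group_ring_carrier_iff group_ring_mult)
  ultimately show ?thesis by (simp add: descend_pullback)
qed

lemma descend_mult:
  "r \<in> carrier R \<Longrightarrow> invariant_elem G H a \<Longrightarrow> \<kappa> (r \<otimes>\<^bsub>R\<^esub> a) = \<pi> r \<otimes>\<^bsub>S\<^esub> \<kappa> a"
  by (simp add: descend_quot_lift_mult mult_invariant_eq_quot_lift)

lemma pullback_mult:
  assumes "f \<in> carrier S" and "f' \<in> carrier S"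
  shows "\<iota> f \<otimes>\<^bsub>R\<^esub> \<iota> f' = int_scale (card H) (\<iota> (f \<otimes>\<^bsub>S\<^esub> f'))"
proof -
  interpret R: cring R by (rule cring_R)
  have "\<iota> f \<otimes>\<^bsub>R\<^esub> \<iota> f' = N \<otimes>\<^bsub>R\<^esub> (q f \<otimes>\<^bsub>R\<^esub> \<iota> f')"
    by (metis norm_mult_quot_lift norm_elem_carrier quot_lift_carrier pullback_carrier R.m_assoc)
  then show ?thesis by (simp add: quot_lift_mult_pullback norm_mult_invariant invariant_pullback)
qed

lemma quot_lift_int_scale_one:
  assumes "invariant_elem G H a"
  shows "q (int_scale m \<one>\<^bsub>S\<^esub>) \<otimes>\<^bsub>R\<^esub> a = int_scale m a"
proof -
  interpret S: cring S by (rule cring_S)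
  have "q (int_scale m \<one>\<^bsub>S\<^esub>) \<otimes>\<^bsub>R\<^esub> a = \<iota> (int_scale m (\<one>\<^bsub>S\<^esub> \<otimes>\<^bsub>S\<^esub> \<kappa> a))"
    using assms by (metis pullback_descend quot_lift_mult_pullback int_scale_mult_left)
  then show ?thesis using assms by (simp add: descend_carrier pullback_int_scale pullback_descend)
qed

lemma invariant_add:
  "invariant_elem G H a \<Longrightarrow> invariant_elem G H b \<Longrightarrow> invariant_elem G H (a \<oplus>\<^bsub>R\<^esub> b)"
  by (simp add: invariant_elem_iff group_ring_carrier_iff group_ring_add)

lemma invariant_int_scale: "invariant_elem G H a \<Longrightarrow> invariant_elem G H (int_scale m a)"
  by (simp add: invariant_elem_iff int_scale_carrier) (simp add: int_scale_def)

lemma invariant_mult: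
  assumes "r \<in> carrier R" and "invariant_elem G H a"
  shows "invariant_elem G H (r \<otimes>\<^bsub>R\<^esub> a)"
proof -
  have "r \<otimes>\<^bsub>R\<^esub> a = \<iota> (\<pi> r \<otimes>\<^bsub>S\<^esub> \<kappa> a)"
    using pullback_mult_pushforward[OF assms(1) descend_carrier] pullback_descend[OF assms(2)] by simp
  then show ?thesis by (simp add: invariant_pullback)
qed

lemma invariant_norm_mult: "invariant_elem G H (N \<otimes>\<^bsub>R\<^esub> a)"
  by (simp add: norm_mult_pushforward invariant_pullback)

lemma norm_pow_mult_invariant:
  "invariant_elem G H a \<Longrightarrow> N [^]\<^bsub>R\<^esub> (n::nat) \<otimes>\<^bsub>R\<^esub> a = int_scale (card H ^ n) a"
proof (induction n arbitrary: a)
  interpret R: cring R by (rule cring_R)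
  case 0 then show ?case by (simp add: invariant_elem_carrier)
next
  interpret R: cring R by (rule cring_R)
  case (Suc n)
  have "N [^]\<^bsub>R\<^esub> Suc n \<otimes>\<^bsub>R\<^esub> a = N [^]\<^bsub>R\<^esub> n \<otimes>\<^bsub>R\<^esub> int_scale (card H) a"
    using Suc.prems invariant_elem_carrier norm_elem_carrier
    by (simp add: R.m_assoc norm_mult_invariant)
  then show ?case
    using Suc.IH[OF invariant_int_scale[OF Suc.prems]] by (simp add: int_scale_int_scale mult.commute)
qed

text \<open>By \<open>pullback_mult\<close>, a product of \<open>n + 1\<close> factors picks up \<open>|H|\<^sup>n\<close>: this is the factor
  \<open>|H|\<^sup>s\<^sup>-\<^sup>1\<close> of the theorem.\<close>

lemma pullback_prod_descend:
  assumes "\<And>i. i < Suc n \<Longrightarrow> invariant_elem G H (b i)"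
  shows "int_scale (card H ^ n) (\<iota> (finprod S (\<lambda>i. \<kappa> (b i)) {..<Suc n})) = finprod R b {..<Suc n}"
  using assms
proof (induction n)
  interpret R: cring R by (rule cring_R)
  interpret S: cring S by (rule cring_S)
  case 0
  then show ?case by (simp add: lessThan_Suc descend_carrier pullback_descend invariant_elem_carrier)
next
  interpret R: cring R by (rule cring_R)
  interpret S: cring S by (rule cring_S)
  case (Suc n)
  define P where "P = finprod S (\<lambda>i. \<kappa> (b i)) {..<Suc n}"
  have P: "P \<in> carrier S" unfolding P_def by (rule S.finprod_closed) (simp add: descend_carrier)
  have b: "b \<in> {..<Suc (Suc n)} \<rightarrow> carrier R" using Suc.prems by (simp add: invariant_elem_carrier)
  have prodS: "finprod S (\<lambda>i. \<kappa> (b i)) {..<Suc (Suc n)} = \<kappa> (b (Suc n)) \<otimes>\<^bsub>S\<^esub> P"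
    unfolding P_def lessThan_Suc[of "Suc n"] by (rule S.finprod_insert) (simp_all add: descend_carrier)
  have prodR: "finprod R b {..<Suc (Suc n)} = b (Suc n) \<otimes>\<^bsub>R\<^esub> finprod R b {..<Suc n}"
    unfolding lessThan_Suc[of "Suc n"] by (rule R.finprod_insert) (use b in auto)
  have "int_scale (card H ^ Suc n) (\<iota> (\<kappa> (b (Suc n)) \<otimes>\<^bsub>S\<^esub> P))
      = int_scale (card H ^ n) (int_scale (card H) (\<iota> (\<kappa> (b (Suc n)) \<otimes>\<^bsub>S\<^esub> P)))"
    by (simp add: int_scale_int_scale mult.commute)
  also have "\<dots> = int_scale (card H ^ n) (b (Suc n) \<otimes>\<^bsub>R\<^esub> \<iota> P)"
    using Suc.prems P by (simp add: pullback_mult[symmetric] descend_carrier pullback_descend)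
  also have "\<dots> = b (Suc n) \<otimes>\<^bsub>R\<^esub> int_scale (card H ^ n) (\<iota> P)"
    by (simp add: int_scale_mult_right)
  finally show ?case using Suc prodS prodR by (simp add: P_def)
qed

lemma pullback_det_descend:
  assumes a: "\<And>i j. i < s \<Longrightarrow> j < s \<Longrightarrow> invariant_elem G H (a i j)" and "s \<ge> 1"
  shows "int_scale (card H ^ (s - 1)) (\<iota> (ring_det S s (\<lambda>i j. \<kappa> (a i j)))) = ring_det R s a"
proof -
  interpret R: cring R by (rule cring_R)
  obtain n where n: "s = Suc n" using \<open>s \<ge> 1\<close> by (cases s) auto
  define P where "P = {\<sigma>. \<sigma> permutes {..<s}}"
  have aR: "a i j \<in> carrier R" if "i < s" "j < s" for i j using a[OF that] by (rule invariant_elem_carrier)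
  have perm: "\<sigma> i < s" if "\<sigma> \<in> P" "i < s" for \<sigma> i
    using that permutes_in_image[of \<sigma> "{..<s}" i] by (auto simp: P_def)
  have prod: "int_scale (card H ^ n) (\<iota> (finprod S (\<lambda>i. \<kappa> (a i (\<sigma> i))) {..<s}))
      = finprod R (\<lambda>i. a i (\<sigma> i)) {..<s}" if "\<sigma> \<in> P" for \<sigma>
    unfolding n by (rule pullback_prod_descend) (use a that perm in \<open>auto simp: n\<close>)
  have prod_carrier: "finprod R (\<lambda>i. a i (\<sigma> i)) {..<s} \<in> carrier R" if "\<sigma> \<in> P" for \<sigma>
    by (rule R.finprod_closed) (use aR that perm in auto)
  show ?thesis
  proof
    fix x
    show "int_scale (card H ^ (s - 1)) (\<iota> (ring_det S s (\<lambda>i j. \<kappa> (a i j)))) x = ring_det R s a x"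
    proof (cases "x \<in> carrier G")
      case True
      then have "(\<Sum>\<sigma>\<in>P. sign \<sigma> * finprod R (\<lambda>i. a i (\<sigma> i)) {..<s} x)
        = int_scale (card H ^ n) (\<iota> (\<lambda>C. \<Sum>\<sigma>\<in>P. sign \<sigma> * finprod S (\<lambda>i. \<kappa> (a i (\<sigma> i))) {..<s} C)) x"
        by (simp add: prod[symmetric] int_scale_def coset_pullback_def sum_distrib_left mult.left_commute)
      then show ?thesis
        using n by (simp add: group_ring_det[OF cring_R aR] group_ring_det[OF cring_S descend_carrier] P_def)
    next
      case False
      then show ?thesis using prod_carrier
        by (simp add: group_ring_det[OF cring_R aR] int_scale_def coset_pullback_def group_ring_carrier_iff P_def)
    qed
  qed
qed

end

section \<open>Linear and alternating forms\<close>

lemma dual_carrier_iff: "f \<in> carrier (dual R N) \<longleftrightarrow> linear_form R N f"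
  by (simp add: dual_def)

lemma dual_add: "f \<oplus>\<^bsub>dual R N\<^esub> g = (\<lambda>x\<in>carrier N. f x \<oplus>\<^bsub>R\<^esub> g x)"
  by (simp add: dual_def)

lemma dual_smult: "r \<odot>\<^bsub>dual R N\<^esub> f = (\<lambda>x\<in>carrier N. r \<otimes>\<^bsub>R\<^esub> f x)"
  by (simp add: dual_def)

lemma invariants_carrier_iff:
  "x \<in> carrier (invariants G H N) \<longleftrightarrow> x \<in> carrier N \<and> (\<forall>h\<in>H. gr_elem G h \<odot>\<^bsub>N\<^esub> x = x)"
  by (simp add: invariants_def)

lemma invariants_add: "x \<oplus>\<^bsub>invariants G H N\<^esub> y = x \<oplus>\<^bsub>N\<^esub> y"
  by (simp add: invariants_def)

lemma invariants_smult: "f \<odot>\<^bsub>invariants G H N\<^esub> x = quot_lift G H f \<odot>\<^bsub>N\<^esub> x"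
  by (simp add: invariants_def)

lemma alt_dual_carrier_iff: "f \<in> carrier (alt_dual R D s) \<longleftrightarrow> alt_multilinear R D s f"
  by (simp add: alt_dual_def)

lemma alt_dual_add: "f \<oplus>\<^bsub>alt_dual R D s\<^esub> g = (\<lambda>xs\<in>tuples D s. f xs \<oplus>\<^bsub>R\<^esub> g xs)"
  by (simp add: alt_dual_def)

lemma alt_dual_smult: "r \<odot>\<^bsub>alt_dual R D s\<^esub> f = (\<lambda>xs\<in>tuples D s. r \<otimes>\<^bsub>R\<^esub> f xs)"
  by (simp add: alt_dual_def)

lemma alt_dual_add_pow:
  "[(n::nat)] \<cdot>\<^bsub>alt_dual (group_ring G) D s\<^esub> f = (\<lambda>xs\<in>tuples D s. int_scale (int n) (f xs))"
  by (induction n)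
    (auto simp: add_pow_nat_0 add_pow_nat_Suc alt_dual_def group_ring_zero group_ring_add
      int_scale_def distrib_right add.commute)

text \<open>Closure of the carrier under the operations is all that is needed of the duals and invariant
  modules; the module axioms are never established for them.\<close>

definition module_closed :: "('r, 'a) ring_scheme \<Rightarrow> ('r, 'n, 'b) module_scheme \<Rightarrow> bool" where
  "module_closed R N \<longleftrightarrow> (\<forall>x\<in>carrier N. \<forall>y\<in>carrier N. x \<oplus>\<^bsub>N\<^esub> y \<in> carrier N) \<and>
      (\<forall>r\<in>carrier R. \<forall>x\<in>carrier N. r \<odot>\<^bsub>N\<^esub> x \<in> carrier N)"

lemma module_closed_add:
  "module_closed R N \<Longrightarrow> x \<in> carrier N \<Longrightarrow> y \<in> carrier N \<Longrightarrow> x \<oplus>\<^bsub>N\<^esub> y \<in> carrier N"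
  by (simp add: module_closed_def)

lemma module_closed_smult:
  "module_closed R N \<Longrightarrow> r \<in> carrier R \<Longrightarrow> x \<in> carrier N \<Longrightarrow> r \<odot>\<^bsub>N\<^esub> x \<in> carrier N"
  by (simp add: module_closed_def)

lemma (in module) module_closed: "module_closed R M"
  by (simp add: module_closed_def)

lemma linear_form_closed: "linear_form R N f \<Longrightarrow> x \<in> carrier N \<Longrightarrow> f x \<in> carrier R"
  by (auto simp: linear_form_def)

lemma linear_form_add:
  "linear_form R N f \<Longrightarrow> x \<in> carrier N \<Longrightarrow> y \<in> carrier N \<Longrightarrow> f (x \<oplus>\<^bsub>N\<^esub> y) = f x \<oplus>\<^bsub>R\<^esub> f y"
  by (simp add: linear_form_def)

lemma linear_form_smult:
  "linear_form R N f \<Longrightarrow> r \<in> carrier R \<Longrightarrow> x \<in> carrier N \<Longrightarrow> f (r \<odot>\<^bsub>N\<^esub> x) = r \<otimes>\<^bsub>R\<^esub> f x"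
  by (simp add: linear_form_def)

lemma linear_form_undefined: "linear_form R N f \<Longrightarrow> x \<notin> carrier N \<Longrightarrow> f x = undefined"
  by (simp add: linear_form_def extensional_def)

lemma linear_formI:
  assumes "\<And>x. x \<in> carrier N \<Longrightarrow> f x \<in> carrier R" and "f \<in> extensional (carrier N)"
    and "\<And>x y. x \<in> carrier N \<Longrightarrow> y \<in> carrier N \<Longrightarrow> f (x \<oplus>\<^bsub>N\<^esub> y) = f x \<oplus>\<^bsub>R\<^esub> f y"
    and "\<And>r x. r \<in> carrier R \<Longrightarrow> x \<in> carrier N \<Longrightarrow> f (r \<odot>\<^bsub>N\<^esub> x) = r \<otimes>\<^bsub>R\<^esub> f x"
  shows "linear_form R N f"
  using assms by (auto simp: linear_form_def)

lemma module_closed_dual: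
  assumes "cring R" and N: "module_closed R N"
  shows "module_closed R (dual R N)"
proof -
  interpret cring R by (rule assms(1))
  have add: "linear_form R N (\<lambda>x\<in>carrier N. f x \<oplus>\<^bsub>R\<^esub> g x)"
    if f: "linear_form R N f" and g: "linear_form R N g" for f g
  proof (rule linear_formI)
    fix x y assume x: "x \<in> carrier N" and y: "y \<in> carrier N"
    show "(\<lambda>x\<in>carrier N. f x \<oplus>\<^bsub>R\<^esub> g x) (x \<oplus>\<^bsub>N\<^esub> y)
        = (\<lambda>x\<in>carrier N. f x \<oplus>\<^bsub>R\<^esub> g x) x \<oplus>\<^bsub>R\<^esub> (\<lambda>x\<in>carrier N. f x \<oplus>\<^bsub>R\<^esub> g x) y"
      using x y module_closed_add[OF N x y] linear_form_add[OF f x y] linear_form_add[OF g x y]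
        linear_form_closed[OF f] linear_form_closed[OF g] by (simp add: a_ac)
  next
    fix r x assume r: "r \<in> carrier R" and x: "x \<in> carrier N"
    show "(\<lambda>x\<in>carrier N. f x \<oplus>\<^bsub>R\<^esub> g x) (r \<odot>\<^bsub>N\<^esub> x) = r \<otimes>\<^bsub>R\<^esub> (\<lambda>x\<in>carrier N. f x \<oplus>\<^bsub>R\<^esub> g x) x"
      using r x module_closed_smult[OF N r x] linear_form_smult[OF f r x] linear_form_smult[OF g r x]
        linear_form_closed[OF f] linear_form_closed[OF g] by (simp add: r_distr)
  qed (use linear_form_closed[OF f] linear_form_closed[OF g] in auto)
  have smult: "linear_form R N (\<lambda>x\<in>carrier N. c \<otimes>\<^bsub>R\<^esub> f x)"
    if f: "linear_form R N f" and c: "c \<in> carrier R" for f c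
  proof (rule linear_formI)
    fix x y assume x: "x \<in> carrier N" and y: "y \<in> carrier N"
    show "(\<lambda>x\<in>carrier N. c \<otimes>\<^bsub>R\<^esub> f x) (x \<oplus>\<^bsub>N\<^esub> y)
        = (\<lambda>x\<in>carrier N. c \<otimes>\<^bsub>R\<^esub> f x) x \<oplus>\<^bsub>R\<^esub> (\<lambda>x\<in>carrier N. c \<otimes>\<^bsub>R\<^esub> f x) y"
      using x y c module_closed_add[OF N x y] linear_form_add[OF f x y] linear_form_closed[OF f]
      by (simp add: r_distr)
  next
    fix r x assume r: "r \<in> carrier R" and x: "x \<in> carrier N"
    show "(\<lambda>x\<in>carrier N. c \<otimes>\<^bsub>R\<^esub> f x) (r \<odot>\<^bsub>N\<^esub> x) = r \<otimes>\<^bsub>R\<^esub> (\<lambda>x\<in>carrier N. c \<otimes>\<^bsub>R\<^esub> f x) x"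
      using r x c module_closed_smult[OF N r x] linear_form_smult[OF f r x] linear_form_closed[OF f]
      by (simp add: m_lcomm)
  qed (use linear_form_closed[OF f] c in auto)
  show ?thesis unfolding module_closed_def dual_carrier_iff dual_add dual_smult
    by (simp add: add smult dual_carrier_iff)
qed

lemma linear_form_finsum:
  assumes "module R M" and f: "linear_form R M \<psi>" and "finite A" and "g \<in> A \<rightarrow> carrier M"
  shows "\<psi> (finsum M g A) = finsum R (\<lambda>a. \<psi> (g a)) A"
  using assms(3,4)
proof (induction A rule: finite_induct)
  interpret module R M by (rule assms(1))
  case empty
  have "\<psi> \<zero>\<^bsub>M\<^esub> = \<psi> (\<zero>\<^bsub>R\<^esub> \<odot>\<^bsub>M\<^esub> \<zero>\<^bsub>M\<^esub>)" by simp
  also have "\<dots> = \<zero>\<^bsub>R\<^esub>"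
    using linear_form_smult[OF f, of "\<zero>\<^bsub>R\<^esub>" "\<zero>\<^bsub>M\<^esub>"] linear_form_closed[OF f, of "\<zero>\<^bsub>M\<^esub>"] by simp
  finally show ?case by simp
next
  interpret module R M by (rule assms(1))
  case (insert a A)
  then have "g a \<in> carrier M" and "g \<in> A \<rightarrow> carrier M" by auto
  then show ?case
    using insert linear_form_add[OF f] linear_form_closed[OF f]
    by (simp add: M.finsum_insert finsum_insert M.finsum_closed Pi_def)
qed

lemma linear_form_int_quot:
  assumes f: "linear_form (group_ring G) N f" and N: "module_closed (group_ring G) N" and "m \<noteq> 0"
    and divisible: "\<And>x. x \<in> carrier N \<Longrightarrow> \<exists>a. f x = int_scale m a"
  shows "linear_form (group_ring G) N (\<lambda>x\<in>carrier N. int_quot m (f x))"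
proof -
  have f_eq: "f x = int_scale m (int_quot m (f x))" if x: "x \<in> carrier N" for x
  proof -
    obtain a where "f x = int_scale m a" using divisible[OF x] by blast
    then show ?thesis by (simp add: int_quot_int_scale[OF \<open>m \<noteq> 0\<close>])
  qed
  show ?thesis
  proof (rule linear_formI)
    fix x assume "x \<in> carrier N"
    then show "(\<lambda>x\<in>carrier N. int_quot m (f x)) x \<in> carrier (group_ring G)"
      using linear_form_closed[OF f] by (simp add: group_ring_carrier_iff int_quot_def)
  next
    fix x y assume x: "x \<in> carrier N" and y: "y \<in> carrier N"
    have "f (x \<oplus>\<^bsub>N\<^esub> y) = int_scale m (int_quot m (f x) \<oplus>\<^bsub>group_ring G\<^esub> int_quot m (f y))"
      using linear_form_add[OF f x y] f_eq[OF x] f_eq[OF y] by (metis int_scale_add)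
    then show "(\<lambda>x\<in>carrier N. int_quot m (f x)) (x \<oplus>\<^bsub>N\<^esub> y)
        = (\<lambda>x\<in>carrier N. int_quot m (f x)) x \<oplus>\<^bsub>group_ring G\<^esub> (\<lambda>x\<in>carrier N. int_quot m (f x)) y"
      using x y module_closed_add[OF N x y] int_quot_int_scale[OF \<open>m \<noteq> 0\<close>] by simp
  next
    fix r x assume r: "r \<in> carrier (group_ring G)" and x: "x \<in> carrier N"
    have "f (r \<odot>\<^bsub>N\<^esub> x) = int_scale m (r \<otimes>\<^bsub>group_ring G\<^esub> int_quot m (f x))"
      using linear_form_smult[OF f r x] f_eq[OF x] by (metis int_scale_mult_right)
    then show "(\<lambda>x\<in>carrier N. int_quot m (f x)) (r \<odot>\<^bsub>N\<^esub> x)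
        = r \<otimes>\<^bsub>group_ring G\<^esub> (\<lambda>x\<in>carrier N. int_quot m (f x)) x"
      using r x module_closed_smult[OF N r x] int_quot_int_scale[OF \<open>m \<noteq> 0\<close>] by simp
  qed simp
qed

lemma tuples_iff: "xs \<in> tuples D s \<longleftrightarrow> length xs = s \<and> set xs \<subseteq> carrier D"
  by (simp add: tuples_def)

lemma tuples_length: "xs \<in> tuples D s \<Longrightarrow> length xs = s"
  by (simp add: tuples_def)

lemma tuples_nth: "xs \<in> tuples D s \<Longrightarrow> i < s \<Longrightarrow> xs ! i \<in> carrier D"
  by (auto simp: tuples_def)

lemma tuples_update: "xs \<in> tuples D s \<Longrightarrow> y \<in> carrier D \<Longrightarrow> xs[i := y] \<in> tuples D s"
  by (auto simp: tuples_def dest: subsetD[OF set_update_subset_insert])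

lemma tuples_map:
  "xs \<in> tuples D s \<Longrightarrow> (\<And>x. x \<in> carrier D \<Longrightarrow> f x \<in> carrier E) \<Longrightarrow> map f xs \<in> tuples E s"
  by (auto simp: tuples_def)

lemma alt_multilinear_add:
  "alt_multilinear R D s \<Phi> \<Longrightarrow> xs \<in> tuples D s \<Longrightarrow> i < s \<Longrightarrow> y \<in> carrier D \<Longrightarrow>
   \<Phi> (xs[i := (xs!i) \<oplus>\<^bsub>D\<^esub> y]) = \<Phi> xs \<oplus>\<^bsub>R\<^esub> \<Phi> (xs[i := y])"
  by (simp add: alt_multilinear_def)

lemma alt_multilinear_smult:
  "alt_multilinear R D s \<Phi> \<Longrightarrow> xs \<in> tuples D s \<Longrightarrow> i < s \<Longrightarrow> r \<in> carrier R \<Longrightarrow>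
   \<Phi> (xs[i := r \<odot>\<^bsub>D\<^esub> (xs!i)]) = r \<otimes>\<^bsub>R\<^esub> \<Phi> xs"
  by (simp add: alt_multilinear_def)

lemma alt_multilinear_alternating:
  "alt_multilinear R D s \<Phi> \<Longrightarrow> xs \<in> tuples D s \<Longrightarrow> i < s \<Longrightarrow> j < s \<Longrightarrow> i \<noteq> j \<Longrightarrow>
   xs!i = xs!j \<Longrightarrow> \<Phi> xs = \<zero>\<^bsub>R\<^esub>"
  by (simp add: alt_multilinear_def)

lemma alt_multilinear_closed: "alt_multilinear R D s \<Phi> \<Longrightarrow> xs \<in> tuples D s \<Longrightarrow> \<Phi> xs \<in> carrier R"
  by (auto simp: alt_multilinear_def)

lemma alt_multilinear_undefined: "alt_multilinear R D s \<Phi> \<Longrightarrow> xs \<notin> tuples D s \<Longrightarrow> \<Phi> xs = undefined"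
  by (auto simp: alt_multilinear_def extensional_def)

lemma alt_multilinear_smult_all:
  assumes "cring R" and D: "module_closed R D" and \<Phi>: "alt_multilinear R D s \<Phi>"
    and c: "c \<in> carrier R" and xs: "xs \<in> tuples D s"
  shows "\<Phi> (map (\<lambda>x. c \<odot>\<^bsub>D\<^esub> x) xs) = c [^]\<^bsub>R\<^esub> s \<otimes>\<^bsub>R\<^esub> \<Phi> xs"
proof -
  interpret cring R by (rule assms(1))
  define ys where "ys k = map (\<lambda>j. if j < k then c \<odot>\<^bsub>D\<^esub> (xs!j) else xs!j) [0..<s]" for k
  have len: "length xs = s" using xs by (rule tuples_length)
  have ys: "ys k \<in> tuples D s" for k
    unfolding ys_def tuples_iff using module_closed_smult[OF D c] tuples_nth[OF xs] by auto
  have ys_Suc: "ys (Suc k) = (ys k)[k := c \<odot>\<^bsub>D\<^esub> ((ys k)!k)]" if "k < s" for k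
    unfolding ys_def using that by (auto simp: list_eq_iff_nth_eq nth_list_update)
  have "\<Phi> (ys k) = c [^]\<^bsub>R\<^esub> k \<otimes>\<^bsub>R\<^esub> \<Phi> xs" if "k \<le> s" for k
    using that
  proof (induction k)
    case 0
    have "ys 0 = xs" unfolding ys_def using len map_nth[of xs] by simp
    then show ?case using alt_multilinear_closed[OF \<Phi> xs] by simp
  next
    case (Suc k)
    then have "\<Phi> (ys (Suc k)) = c \<otimes>\<^bsub>R\<^esub> (c [^]\<^bsub>R\<^esub> k \<otimes>\<^bsub>R\<^esub> \<Phi> xs)"
      using ys_Suc alt_multilinear_smult[OF \<Phi> ys _ c] by simp
    then show ?case using c alt_multilinear_closed[OF \<Phi> xs] by (simp add: m_ac)
  qed
  moreover have "ys s = map (\<lambda>x. c \<odot>\<^bsub>D\<^esub> x) xs"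
    unfolding ys_def using len by (simp add: list_eq_iff_nth_eq)
  ultimately show ?thesis by (metis order_refl)
qed

lemma linear_form_slot:
  assumes D: "module_closed R D" and \<Phi>: "alt_multilinear R D s \<Phi>"
    and xs: "xs \<in> tuples D s" and "k < s"
  shows "linear_form R D (\<lambda>x\<in>carrier D. \<Phi> (xs[k := x]))"
proof -
  have k: "k < length xs" using xs \<open>k < s\<close> by (simp add: tuples_length)
  show ?thesis
  proof (rule linear_formI)
    fix x y assume x: "x \<in> carrier D" and y: "y \<in> carrier D"
    show "(\<lambda>x\<in>carrier D. \<Phi> (xs[k := x])) (x \<oplus>\<^bsub>D\<^esub> y)
        = (\<lambda>x\<in>carrier D. \<Phi> (xs[k := x])) x \<oplus>\<^bsub>R\<^esub> (\<lambda>x\<in>carrier D. \<Phi> (xs[k := x])) y"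
      using alt_multilinear_add[OF \<Phi> tuples_update[OF xs x, where i=k] \<open>k < s\<close> y] x y k module_closed_add[OF D x y]
      by simp
  next
    fix r x assume r: "r \<in> carrier R" and x: "x \<in> carrier D"
    show "(\<lambda>x\<in>carrier D. \<Phi> (xs[k := x])) (r \<odot>\<^bsub>D\<^esub> x) = r \<otimes>\<^bsub>R\<^esub> (\<lambda>x\<in>carrier D. \<Phi> (xs[k := x])) x"
      using alt_multilinear_smult[OF \<Phi> tuples_update[OF xs x, where i=k] \<open>k < s\<close> r] x k module_closed_smult[OF D r x]
      by simp
  qed (use alt_multilinear_closed[OF \<Phi> tuples_update[OF xs]] in auto)
qed

text \<open>The hypotheses on \<open>h\<close> concern only the values that occur, so that \<open>h\<close> may involve an exact
  division.\<close>

lemma alt_multilinear_transfer: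
  assumes \<Phi>: "alt_multilinear R D s \<Phi>" and E: "module_closed R' E"
    and f: "\<And>x. x \<in> carrier E \<Longrightarrow> f x \<in> carrier D"
    and f_add: "\<And>x y. x \<in> carrier E \<Longrightarrow> y \<in> carrier E \<Longrightarrow> f (x \<oplus>\<^bsub>E\<^esub> y) = f x \<oplus>\<^bsub>D\<^esub> f y"
    and f_smult: "\<And>r x. r \<in> carrier R' \<Longrightarrow> x \<in> carrier E \<Longrightarrow> f (r \<odot>\<^bsub>E\<^esub> x) = \<sigma> r \<odot>\<^bsub>D\<^esub> f x"
    and \<sigma>: "\<And>r. r \<in> carrier R' \<Longrightarrow> \<sigma> r \<in> carrier R"
    and h: "\<And>xs. xs \<in> tuples E s \<Longrightarrow> h (\<Phi> (map f xs)) \<in> carrier R'"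
    and h_add: "\<And>xs ys. xs \<in> tuples E s \<Longrightarrow> ys \<in> tuples E s \<Longrightarrow>
      h (\<Phi> (map f xs) \<oplus>\<^bsub>R\<^esub> \<Phi> (map f ys)) = h (\<Phi> (map f xs)) \<oplus>\<^bsub>R'\<^esub> h (\<Phi> (map f ys))"
    and h_smult: "\<And>r xs. r \<in> carrier R' \<Longrightarrow> xs \<in> tuples E s \<Longrightarrow>
      h (\<sigma> r \<otimes>\<^bsub>R\<^esub> \<Phi> (map f xs)) = r \<otimes>\<^bsub>R'\<^esub> h (\<Phi> (map f xs))"
    and h_zero: "h \<zero>\<^bsub>R\<^esub> = \<zero>\<^bsub>R'\<^esub>"
  shows "alt_multilinear R' E s (\<lambda>xs\<in>tuples E s. h (\<Phi> (map f xs)))"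
  unfolding alt_multilinear_def
proof (intro conjI ballI allI impI)
  fix xs i y assume xs: "xs \<in> tuples E s" and i: "i < s" and y: "y \<in> carrier E"
  have xi: "xs ! i \<in> carrier E" using tuples_nth[OF xs i] .
  have "map f (xs[i := xs ! i \<oplus>\<^bsub>E\<^esub> y]) = (map f xs)[i := map f xs ! i \<oplus>\<^bsub>D\<^esub> f y]"
    using xs i xi y by (simp add: map_update f_add tuples_length)
  then have "\<Phi> (map f (xs[i := xs ! i \<oplus>\<^bsub>E\<^esub> y])) = \<Phi> (map f xs) \<oplus>\<^bsub>R\<^esub> \<Phi> (map f (xs[i := y]))"
    using alt_multilinear_add[OF \<Phi> tuples_map[OF xs f] i f[OF y]] by (simp add: map_update)
  then show "(\<lambda>xs\<in>tuples E s. h (\<Phi> (map f xs))) (xs[i := xs ! i \<oplus>\<^bsub>E\<^esub> y])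
      = (\<lambda>xs\<in>tuples E s. h (\<Phi> (map f xs))) xs \<oplus>\<^bsub>R'\<^esub> (\<lambda>xs\<in>tuples E s. h (\<Phi> (map f xs))) (xs[i := y])"
    using xs y tuples_update[OF xs] module_closed_add[OF E xi y] h_add[OF xs tuples_update[OF xs y]] by simp
next
  fix xs i r assume xs: "xs \<in> tuples E s" and i: "i < s" and r: "r \<in> carrier R'"
  have xi: "xs ! i \<in> carrier E" using tuples_nth[OF xs i] .
  have "map f (xs[i := r \<odot>\<^bsub>E\<^esub> xs ! i]) = (map f xs)[i := \<sigma> r \<odot>\<^bsub>D\<^esub> map f xs ! i]"
    using xs i xi r by (simp add: map_update f_smult tuples_length)
  then have "\<Phi> (map f (xs[i := r \<odot>\<^bsub>E\<^esub> xs ! i])) = \<sigma> r \<otimes>\<^bsub>R\<^esub> \<Phi> (map f xs)"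
    using alt_multilinear_smult[OF \<Phi> tuples_map[OF xs f] i \<sigma>[OF r]] by simp
  then show "(\<lambda>xs\<in>tuples E s. h (\<Phi> (map f xs))) (xs[i := r \<odot>\<^bsub>E\<^esub> xs ! i])
      = r \<otimes>\<^bsub>R'\<^esub> (\<lambda>xs\<in>tuples E s. h (\<Phi> (map f xs))) xs"
    using xs tuples_update[OF xs] module_closed_smult[OF E r xi] h_smult[OF r xs] by simp
next
  fix xs i j assume xs: "xs \<in> tuples E s" and i: "i < s" and j: "j < s" and ij: "i \<noteq> j \<and> xs ! i = xs ! j"
  then have "\<Phi> (map f xs) = \<zero>\<^bsub>R\<^esub>"
    by (intro alt_multilinear_alternating[OF \<Phi> tuples_map[OF xs f] i j]) (auto simp: tuples_length)
  then show "(\<lambda>xs\<in>tuples E s. h (\<Phi> (map f xs))) xs = \<zero>\<^bsub>R'\<^esub>" using xs h_zero by simp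
qed (use h in auto)

lemma eval_bidual_apply: "\<psi> \<in> carrier (dual R M) \<Longrightarrow> eval_bidual R M x \<psi> = \<psi> x"
  by (simp add: eval_bidual_def)

lemma eval_bidual_closed:
  assumes "module R M" and x: "x \<in> carrier M"
  shows "eval_bidual R M x \<in> carrier (dual R (dual R M))"
proof -
  have closed: "module_closed R (dual R M)"
    using module_closed_dual[OF module.axioms(1)[OF assms(1)] module.module_closed[OF assms(1)]] .
  show ?thesis unfolding dual_carrier_iff
  proof (rule linear_formI)
    fix \<psi> assume "\<psi> \<in> carrier (dual R M)"
    then show "eval_bidual R M x \<psi> \<in> carrier R"
      using x by (simp add: eval_bidual_def dual_carrier_iff linear_form_closed)
  next
    fix \<psi> \<psi>' assume "\<psi> \<in> carrier (dual R M)" and "\<psi>' \<in> carrier (dual R M)"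
    then show "eval_bidual R M x (\<psi> \<oplus>\<^bsub>dual R M\<^esub> \<psi>') = eval_bidual R M x \<psi> \<oplus>\<^bsub>R\<^esub> eval_bidual R M x \<psi>'"
      using x module_closed_add[OF closed] by (simp add: eval_bidual_def dual_add)
  next
    fix r \<psi> assume "r \<in> carrier R" and "\<psi> \<in> carrier (dual R M)"
    then show "eval_bidual R M x (r \<odot>\<^bsub>dual R M\<^esub> \<psi>) = r \<otimes>\<^bsub>R\<^esub> eval_bidual R M x \<psi>"
      using x module_closed_smult[OF closed] by (simp add: eval_bidual_def dual_smult)
  qed (simp add: eval_bidual_def)
qed

lemma linear_form_eq_on_generators:
  assumes "module R M" and f: "linear_form R M f" and f': "linear_form R M f'"
    and "finite A" and "A \<subseteq> carrier M"
    and gen: "\<And>x. x \<in> carrier M \<Longrightarrow> \<exists>c. c \<in> A \<rightarrow> carrier R \<and> x = (\<Oplus>\<^bsub>M\<^esub> a\<in>A. c a \<odot>\<^bsub>M\<^esub> a)"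
    and eq: "\<And>a. a \<in> A \<Longrightarrow> f a = f' a"
  shows "f = f'"
proof
  interpret module R M by (rule assms(1))
  fix x
  show "f x = f' x"
  proof (cases "x \<in> carrier M")
    case True
    obtain c where c: "c \<in> A \<rightarrow> carrier R" and x: "x = (\<Oplus>\<^bsub>M\<^esub> a\<in>A. c a \<odot>\<^bsub>M\<^esub> a)"
      using gen[OF True] by blast
    have terms: "(\<lambda>a. c a \<odot>\<^bsub>M\<^esub> a) \<in> A \<rightarrow> carrier M" using c assms(5) by auto
    have "f (c a \<odot>\<^bsub>M\<^esub> a) = f' (c a \<odot>\<^bsub>M\<^esub> a)" if a: "a \<in> A" for a
    proof -
      have "c a \<in> carrier R" and "a \<in> carrier M" using a c assms(5) by auto
      then show ?thesis using linear_form_smult[OF f] linear_form_smult[OF f'] eq[OF a] by simp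
    qed
    moreover have "f' (c a \<odot>\<^bsub>M\<^esub> a) \<in> carrier R" if "a \<in> A" for a
      using that terms linear_form_closed[OF f'] by auto
    ultimately show ?thesis
      unfolding x linear_form_finsum[OF assms(1) f \<open>finite A\<close> terms]
        linear_form_finsum[OF assms(1) f' \<open>finite A\<close> terms]
      by (intro R.finsum_cong') auto
  qed (simp add: linear_form_undefined[OF f] linear_form_undefined[OF f'])
qed

lemma (in group) linear_form_eq_if_eq_at_one:
  assumes "finite (carrier G)" and N: "module_closed (group_ring G) N"
    and f: "linear_form (group_ring G) N f" and f': "linear_form (group_ring G) N f'"
    and at_one: "\<And>x. x \<in> carrier N \<Longrightarrow> f x \<one> = f' x \<one>" and x: "x \<in> carrier N"
  shows "f x = f' x"
proof
  fix g
  show "f x g = f' x g"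
  proof (cases "g \<in> carrier G")
    case True
    have x': "gr_elem G (inv g) \<odot>\<^bsub>N\<^esub> x \<in> carrier N"
      using module_closed_smult[OF N gr_elem_carrier x] .
    have shift: "f x g = f (gr_elem G (inv g) \<odot>\<^bsub>N\<^esub> x) \<one>" if "linear_form (group_ring G) N f" for f
      using linear_form_smult[OF that gr_elem_carrier x] True
      by (simp add: gr_elem_mult[OF assms(1)])
    show ?thesis using shift[OF f] shift[OF f'] at_one[OF x'] by simp
  next
    case False
    then show ?thesis
      using linear_form_closed[OF f x] linear_form_closed[OF f' x] by (simp add: group_ring_carrier_iff)
  qed
qed

section \<open>Finitely generated modules are rationally reflexive\<close>

lemma common_denominator:
  fixes f :: "'i \<Rightarrow> rat"
  assumes "finite I"
  shows "\<exists>D::int. D > 0 \<and> (\<exists>n. \<forall>i\<in>I. of_int D * f i = of_int (n i))"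
  using assms
proof (induction I rule: finite_induct)
  case empty
  show ?case by (intro exI[of _ 1]) simp
next
  case (insert j I)
  then obtain D n where D: "D > 0" and n: "\<forall>i\<in>I. of_int D * f i = of_int (n i)" by blast
  obtain p q where pq: "quotient_of (f j) = (p, q)" by (cases "quotient_of (f j)")
  have q: "q > 0" and fj: "f j = of_int p / of_int q"
    using quotient_of_denom_pos[OF pq] quotient_of_div[OF pq] by auto
  show ?case
  proof (intro exI conjI ballI)
    show "D * q > 0" using D q by simp
    fix i assume "i \<in> insert j I"
    then show "of_int (D * q) * f i = of_int (if i = j then D * p else n i * q)"
      using n q by (auto simp: fj algebra_simps)
  qed
qed

interpretation rat_fun: vector_space "\<lambda>(c::rat) (f::'i \<Rightarrow> rat) i. c * f i"
  by unfold_locales (auto simp: fun_eq_iff algebra_simps)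

interpretation rat_fun_pair: vector_space_pair "\<lambda>(c::rat) (f::'i \<Rightarrow> rat) i. c * f i" "(*) :: rat \<Rightarrow> rat \<Rightarrow> rat"
  by unfold_locales (auto simp: algebra_simps)

lemma span_multiple_in_lattice:
  fixes E :: "('i \<Rightarrow> int) set" and L :: "('i \<Rightarrow> rat) \<Rightarrow> rat"
  assumes "E \<noteq> {}"
    and add: "\<And>v w. v \<in> E \<Longrightarrow> w \<in> E \<Longrightarrow> v + w \<in> E"
    and scale: "\<And>k v. v \<in> E \<Longrightarrow> int_scale k v \<in> E"
    and \<phi>_add: "\<And>v w. v \<in> E \<Longrightarrow> w \<in> E \<Longrightarrow> \<phi> (v + w) = \<phi> v + \<phi> w"
    and \<phi>_scale: "\<And>k v. v \<in> E \<Longrightarrow> \<phi> (int_scale k v) = k * \<phi> v"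
    and L: "Vector_Spaces.linear (\<lambda>c f i. c * f i) (*) L"
    and B: "\<And>b. b \<in> B \<Longrightarrow> \<exists>v\<in>E. b = rat_of_int \<circ> v \<and> L b = of_int (\<phi> v)"
    and "w \<in> rat_fun.span B"
  shows "\<exists>d::int. d > 0 \<and> (\<exists>v\<in>E. (\<lambda>i. rat_of_int d * w i) = rat_of_int \<circ> v \<and> rat_of_int d * L w = of_int (\<phi> v))"
  using \<open>w \<in> rat_fun.span B\<close>
proof (induction rule: rat_fun.span_induct_alt)
  case base
  obtain v where v: "v \<in> E" using \<open>E \<noteq> {}\<close> by blast
  have "L 0 = 0" using module_hom.zero[OF L[unfolded module_hom_iff_linear[symmetric]]] by simp
  then show ?case
    using scale[OF v, of 0] \<phi>_scale[OF v, of 0]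
    by (intro exI[of _ 1] conjI bexI[of _ "int_scale 0 v"]) (auto simp: int_scale_def zero_fun_def)
next
  case (step c x w)
  obtain u where u: "u \<in> E" "x = rat_of_int \<circ> u" "L x = of_int (\<phi> u)" using B[OF step(1)] by blast
  obtain d v where d: "d > 0" and v: "v \<in> E" and dw: "(\<lambda>i. rat_of_int d * w i) = rat_of_int \<circ> v"
    and Lw: "rat_of_int d * L w = of_int (\<phi> v)" using step(2) by blast
  obtain a b where ab: "quotient_of c = (a, b)" by (cases "quotient_of c")
  have b: "b > 0" and c: "c = of_int a / of_int b"
    using quotient_of_denom_pos[OF ab] quotient_of_div[OF ab] by auto
  define v' where "v' = int_scale (a * d) u + int_scale b v"
  have bc: "of_int b * c = (of_int a :: rat)" using b by (simp add: c)
  have "of_int (b * d) * (c * x i + w i) = of_int (v' i)" for i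
  proof -
    have "of_int (b * d) * (c * x i + w i) = (of_int b * c) * rat_of_int d * x i + of_int b * (rat_of_int d * w i)"
      by (simp only: of_int_mult ring_distribs mult_ac)
    also have "\<dots> = of_int (v' i)"
      using fun_cong[OF dw, of i] by (simp add: bc u(2) v'_def int_scale_def)
    finally show ?thesis .
  qed
  moreover have "of_int (b * d) * L (\<lambda>i. c * x i + w i) = of_int (\<phi> v')"
  proof -
    have "L (\<lambda>i. c * x i + w i) = c * L x + L w"
      using module_hom.add[OF L[unfolded module_hom_iff_linear[symmetric]], of "\<lambda>i. c * x i" w]
        module_hom.scale[OF L[unfolded module_hom_iff_linear[symmetric]], of c x]
      by (simp add: plus_fun_def)
    then have "of_int (b * d) * L (\<lambda>i. c * x i + w i) = (of_int b * c) * rat_of_int d * L x + of_int b * (rat_of_int d * L w)"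
      by (simp only: of_int_mult ring_distribs mult_ac)
    also have "\<dots> = of_int (\<phi> v')"
      using Lw by (simp add: bc u(3) v'_def \<phi>_add scale u(1) v \<phi>_scale)
    finally show ?thesis .
  qed
  moreover have "v' \<in> E" unfolding v'_def by (intro add scale u(1) v)
  ultimately show ?case
    using b d by (intro exI[of _ "b * d"] conjI bexI[of _ v']) (simp_all add: fun_eq_iff)
qed

lemma sum_fun_apply: "(\<Sum>i\<in>A. f i) x = (\<Sum>i\<in>A. f i x)"
  by (induction A rule: infinite_finite_induct) auto

lemma int_functional_rat_extension:
  fixes E :: "('i \<Rightarrow> int) set"
  assumes "E \<noteq> {}"
    and add: "\<And>v w. v \<in> E \<Longrightarrow> w \<in> E \<Longrightarrow> v + w \<in> E"
    and scale: "\<And>k v. v \<in> E \<Longrightarrow> int_scale k v \<in> E"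
    and \<phi>_add: "\<And>v w. v \<in> E \<Longrightarrow> w \<in> E \<Longrightarrow> \<phi> (v + w) = \<phi> v + \<phi> w"
    and \<phi>_scale: "\<And>k v. v \<in> E \<Longrightarrow> \<phi> (int_scale k v) = k * \<phi> v"
  shows "\<exists>L. Vector_Spaces.linear (\<lambda>c f i. c * f i) (*) L \<and> (\<forall>v\<in>E. L (rat_of_int \<circ> v) = of_int (\<phi> v))"
proof -
  obtain B where B: "B \<subseteq> (\<lambda>v. rat_of_int \<circ> v) ` E" and "rat_fun.independent B"
    and span: "(\<lambda>v. rat_of_int \<circ> v) ` E \<subseteq> rat_fun.span B"
    using rat_fun.maximal_independent_subset by blast
  define pre where "pre b = (SOME v. v \<in> E \<and> b = rat_of_int \<circ> v)" for b :: "'i \<Rightarrow> rat"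
  have pre: "pre b \<in> E \<and> b = rat_of_int \<circ> pre b" if "b \<in> B" for b
  proof -
    have "\<exists>v. v \<in> E \<and> b = rat_of_int \<circ> v" using that B by blast
    from someI_ex[OF this] show ?thesis unfolding pre_def .
  qed
  define L where "L = rat_fun_pair.construct B (\<lambda>b. of_int (\<phi> (pre b)))"
  have L: "Vector_Spaces.linear (\<lambda>c f i. c * f i) (*) L"
    unfolding L_def by (rule rat_fun_pair.linear_construct) fact
  have LB: "L b = of_int (\<phi> (pre b))" if "b \<in> B" for b
    unfolding L_def by (rule rat_fun_pair.construct_basis) fact+
  have "L (rat_of_int \<circ> v) = of_int (\<phi> v)" if v: "v \<in> E" for v
  proof -
    have basis: "\<exists>u\<in>E. b = rat_of_int \<circ> u \<and> L b = of_int (\<phi> u)" if "b \<in> B" for b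
      using pre[OF that] LB[OF that] by blast
    have in_span: "rat_of_int \<circ> v \<in> rat_fun.span B" using span v by blast
    have "\<exists>d::int. d > 0 \<and> (\<exists>v'\<in>E. (\<lambda>i. rat_of_int d * (rat_of_int \<circ> v) i) = rat_of_int \<circ> v'
        \<and> rat_of_int d * L (rat_of_int \<circ> v) = of_int (\<phi> v'))"
      by (rule span_multiple_in_lattice) (fact assms L basis in_span)+
    then obtain d v' where "d > 0" and v': "v' \<in> E"
      and dv: "(\<lambda>i. rat_of_int d * (rat_of_int \<circ> v) i) = rat_of_int \<circ> v'"
      and Lv: "rat_of_int d * L (rat_of_int \<circ> v) = of_int (\<phi> v')"
      by blast
    have "v' = int_scale d v"
    proof
      fix i
      have "rat_of_int (v' i) = rat_of_int (d * v i)" using fun_cong[OF dv, of i] by simp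
      then show "v' i = int_scale d v i" by (simp only: of_int_eq_iff int_scale_def)
    qed
    then show ?thesis using Lv \<phi>_scale[OF v] \<open>d > 0\<close> by simp
  qed
  with L show ?thesis by blast
qed

lemma int_functional_scaled_dot:
  fixes E :: "('i \<Rightarrow> int) set"
  assumes "finite I" and support: "\<And>v i. v \<in> E \<Longrightarrow> i \<notin> I \<Longrightarrow> v i = 0"
    and add: "\<And>v w. v \<in> E \<Longrightarrow> w \<in> E \<Longrightarrow> v + w \<in> E"
    and scale: "\<And>k v. v \<in> E \<Longrightarrow> int_scale k v \<in> E"
    and \<phi>_add: "\<And>v w. v \<in> E \<Longrightarrow> w \<in> E \<Longrightarrow> \<phi> (v + w) = \<phi> v + \<phi> w"
    and \<phi>_scale: "\<And>k v. v \<in> E \<Longrightarrow> \<phi> (int_scale k v) = k * \<phi> v"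
  shows "\<exists>D>0. \<exists>n. \<forall>v\<in>E. D * \<phi> v = (\<Sum>i\<in>I. v i * n i)"
proof (cases "E = {}")
  case False
  have "\<exists>L::('i \<Rightarrow> rat) \<Rightarrow> rat. Vector_Spaces.linear (\<lambda>c f i. c * f i) (*) L
      \<and> (\<forall>v\<in>E. L (rat_of_int \<circ> v) = of_int (\<phi> v))"
    by (rule int_functional_rat_extension) (fact False add scale \<phi>_add \<phi>_scale)+
  then obtain L :: "('i \<Rightarrow> rat) \<Rightarrow> rat" where L: "Vector_Spaces.linear (\<lambda>c f i. c * f i) (*) L"
    and LE: "\<And>v. v \<in> E \<Longrightarrow> L (rat_of_int \<circ> v) = of_int (\<phi> v)"
    by blast
  define \<delta> where "\<delta> i = (\<lambda>j. if j = i then 1 else 0 :: rat)" for i :: 'i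
  obtain D n where "D > 0" and n: "\<And>i. i \<in> I \<Longrightarrow> of_int D * L (\<delta> i) = of_int (n i)"
    using common_denominator[OF \<open>finite I\<close>, of "\<lambda>i. L (\<delta> i)"] by blast
  have "D * \<phi> v = (\<Sum>i\<in>I. v i * n i)" if v: "v \<in> E" for v
  proof -
    have "(\<Sum>i\<in>I. (\<lambda>j. of_int (v i) * \<delta> i j)) j = of_int (v j)" for j
    proof -
      have "(\<Sum>i\<in>I. (\<lambda>j. of_int (v i) * \<delta> i j)) j = (\<Sum>i\<in>I. if i = j then of_int (v i) else 0)"
        unfolding sum_fun_apply by (rule sum.cong) (auto simp: \<delta>_def)
      then show ?thesis using support[OF v] \<open>finite I\<close> by auto
    qed
    then have "rat_of_int \<circ> v = (\<Sum>i\<in>I. (\<lambda>j. of_int (v i) * \<delta> i j))" by auto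
    then have "L (rat_of_int \<circ> v) = (\<Sum>i\<in>I. L (\<lambda>j. of_int (v i) * \<delta> i j))"
      using module_hom.sum[OF L[unfolded module_hom_iff_linear[symmetric]]] by simp
    also have "\<dots> = (\<Sum>i\<in>I. of_int (v i) * L (\<delta> i))"
      using module_hom.scale[OF L[unfolded module_hom_iff_linear[symmetric]]] by simp
    finally have Lv: "L (rat_of_int \<circ> v) = (\<Sum>i\<in>I. of_int (v i) * L (\<delta> i))" .
    have "rat_of_int (D * \<phi> v) = of_int D * L (rat_of_int \<circ> v)" using LE[OF v] by simp
    also have "\<dots> = (\<Sum>i\<in>I. of_int (v i) * (of_int D * L (\<delta> i)))"
      unfolding Lv sum_distrib_left by (intro sum.cong refl) (rule mult.left_commute)
    also have "\<dots> = (\<Sum>i\<in>I. rat_of_int (v i * n i))" by (intro sum.cong refl) (simp add: n)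
    also have "\<dots> = rat_of_int (\<Sum>i\<in>I. v i * n i)" by (simp only: of_int_sum)
    finally show ?thesis by (simp only: of_int_eq_iff)
  qed
  with \<open>D > 0\<close> show ?thesis by blast
qed (auto intro: exI[of _ 1])

definition dual_coords :: "'m set \<Rightarrow> ('m \<Rightarrow> 'g \<Rightarrow> int) \<Rightarrow> 'm \<times> 'g \<Rightarrow> int" where
  "dual_coords A \<psi> = (\<lambda>(a, g). if a \<in> A then \<psi> a g else 0)"

lemma (in comm_group) dual_coords_int_scale:
  assumes "finite (carrier G)" and "A \<subseteq> carrier M" and \<psi>: "\<psi> \<in> carrier (dual (group_ring G) M)"
  shows "dual_coords A (int_scale k \<one>\<^bsub>group_ring G\<^esub> \<odot>\<^bsub>dual (group_ring G) M\<^esub> \<psi>) = int_scale k (dual_coords A \<psi>)"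
proof -
  interpret R: cring "group_ring G" by (rule cring_group_ring[OF assms(1)])
  have "int_scale k \<one>\<^bsub>group_ring G\<^esub> \<otimes>\<^bsub>group_ring G\<^esub> \<psi> a = int_scale k (\<psi> a)" if "a \<in> A" for a
  proof -
    have "\<psi> a \<in> carrier (group_ring G)"
      using that assms(2) linear_form_closed[of _ M \<psi>] \<psi> by (auto simp: dual_carrier_iff)
    then show ?thesis by (simp add: int_scale_mult_left)
  qed
  then show ?thesis
    using assms(2) by (auto simp: fun_eq_iff dual_coords_def dual_smult int_scale_def)
qed

lemma (in comm_group) dual_coords_inj:
  assumes M: "module (group_ring G) M" and "finite A" and A: "A \<subseteq> carrier M"
    and gen: "\<And>x. x \<in> carrier M \<Longrightarrow> \<exists>c. c \<in> A \<rightarrow> carrier (group_ring G) \<and> x = (\<Oplus>\<^bsub>M\<^esub> a\<in>A. c a \<odot>\<^bsub>M\<^esub> a)"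
  shows "inj_on (dual_coords A) (carrier (dual (group_ring G) M))"
proof (rule inj_onI)
  fix \<psi> \<psi>' assume \<psi>: "\<psi> \<in> carrier (dual (group_ring G) M)" and \<psi>': "\<psi>' \<in> carrier (dual (group_ring G) M)"
    and eq: "dual_coords A \<psi> = dual_coords A \<psi>'"
  then have lin: "linear_form (group_ring G) M \<psi>" "linear_form (group_ring G) M \<psi>'"
    by (simp_all add: dual_carrier_iff)
  have "\<psi> a = \<psi>' a" if "a \<in> A" for a
    using that fun_cong[OF eq, of "(a, _)"] linear_form_closed[OF lin(1)] linear_form_closed[OF lin(2)] A
    by (auto simp: fun_eq_iff dual_coords_def group_ring_carrier_iff)
  then show "\<psi> = \<psi>'" by (intro linear_form_eq_on_generators[OF M lin \<open>finite A\<close> A gen])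
qed

lemma (in comm_group) bidual_at_one_dot:
  fixes M :: "('a \<Rightarrow> int, 'm) module"
  assumes fin: "finite (carrier G)" and M: "module (group_ring G) M"
    and "finite A" and A: "A \<subseteq> carrier M"
    and gen: "\<And>x. x \<in> carrier M \<Longrightarrow> \<exists>c. c \<in> A \<rightarrow> carrier (group_ring G) \<and> x = (\<Oplus>\<^bsub>M\<^esub> a\<in>A. c a \<odot>\<^bsub>M\<^esub> a)"
    and y: "y \<in> carrier (dual (group_ring G) (dual (group_ring G) M))"
  shows "\<exists>D>0. \<exists>n. \<forall>\<psi>\<in>carrier (dual (group_ring G) M).
           D * y \<psi> \<one> = (\<Sum>a\<in>A. \<Sum>g\<in>carrier G. \<psi> a g * n (a, g))"
proof -
  let ?R = "group_ring G" and ?MD = "dual (group_ring G) M" and ?e = "dual_coords A"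
  interpret R: cring ?R by (rule cring_group_ring[OF fin])
  have MD: "module_closed ?R ?MD" by (rule module_closed_dual[OF R.is_cring module.module_closed[OF M]])
  have y_lin: "linear_form ?R ?MD y" using y by (simp add: dual_carrier_iff)
  have sc: "int_scale k \<one>\<^bsub>?R\<^esub> \<in> carrier ?R" for k by (simp add: int_scale_carrier)
  define \<phi> where "\<phi> v = y (inv_into (carrier ?MD) ?e v) \<one>" for v
  have \<phi>: "\<phi> (?e \<psi>) = y \<psi> \<one>" if "\<psi> \<in> carrier ?MD" for \<psi>
    using dual_coords_inj[OF M \<open>finite A\<close> A gen] that by (simp add: \<phi>_def)
  have "\<exists>D>0. \<exists>n. \<forall>v\<in>?e ` carrier ?MD. D * \<phi> v = (\<Sum>i\<in>A \<times> carrier G. v i * n i)"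
  proof (rule int_functional_scaled_dot)
    show "finite (A \<times> carrier G)" using \<open>finite A\<close> fin by simp
    show "v i = 0" if v: "v \<in> ?e ` carrier ?MD" and i: "i \<notin> A \<times> carrier G" for v i
    proof -
      obtain \<psi> where \<psi>: "\<psi> \<in> carrier ?MD" "v = ?e \<psi>" using v by blast
      then have "\<psi> a \<in> carrier ?R" if "a \<in> A" for a
        using that A linear_form_closed[of ?R M \<psi>] by (auto simp: dual_carrier_iff)
      then show ?thesis using i \<psi>(2) by (cases i) (auto simp: dual_coords_def group_ring_carrier_iff)
    qed
    fix v w k assume "v \<in> ?e ` carrier ?MD" and "w \<in> ?e ` carrier ?MD"
    then obtain \<psi> \<psi>' where \<psi>: "\<psi> \<in> carrier ?MD" "v = ?e \<psi>" and \<psi>': "\<psi>' \<in> carrier ?MD" "w = ?e \<psi>'"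
      by blast
    have sum: "\<psi> \<oplus>\<^bsub>?MD\<^esub> \<psi>' \<in> carrier ?MD" using module_closed_add[OF MD \<psi>(1) \<psi>'(1)] .
    have v_plus_w: "v + w = ?e (\<psi> \<oplus>\<^bsub>?MD\<^esub> \<psi>')"
      using A \<psi> \<psi>' by (auto simp: fun_eq_iff dual_coords_def dual_add group_ring_add)
    then show "v + w \<in> ?e ` carrier ?MD" using sum by blast
    show "\<phi> (v + w) = \<phi> v + \<phi> w"
      using \<phi>[OF sum] \<phi>[OF \<psi>(1)] \<phi>[OF \<psi>'(1)] linear_form_add[OF y_lin \<psi>(1) \<psi>'(1)] \<psi> \<psi>' v_plus_w
      by (simp add: group_ring_add)
    have scaled: "int_scale k \<one>\<^bsub>?R\<^esub> \<odot>\<^bsub>?MD\<^esub> \<psi> \<in> carrier ?MD" using module_closed_smult[OF MD sc \<psi>(1)] .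
    have k_v: "int_scale k v = ?e (int_scale k \<one>\<^bsub>?R\<^esub> \<odot>\<^bsub>?MD\<^esub> \<psi>)"
      using dual_coords_int_scale[OF fin A \<psi>(1)] \<psi> by simp
    then show "int_scale k v \<in> ?e ` carrier ?MD" using scaled by blast
    show "\<phi> (int_scale k v) = k * \<phi> v"
      using \<phi>[OF scaled] \<phi>[OF \<psi>(1)] linear_form_smult[OF y_lin sc \<psi>(1)] linear_form_closed[OF y_lin \<psi>(1)] k_v \<psi>
      by (simp add: int_scale_mult_left) (simp add: int_scale_def)
  qed
  then obtain D n where "D > 0"
    and n: "\<And>\<psi>. \<psi> \<in> carrier ?MD \<Longrightarrow> D * \<phi> (?e \<psi>) = (\<Sum>i\<in>A \<times> carrier G. ?e \<psi> i * n i)"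
    by blast
  have "(\<Sum>i\<in>A \<times> carrier G. ?e \<psi> i * n i) = (\<Sum>a\<in>A. \<Sum>g\<in>carrier G. \<psi> a g * n (a, g))" for \<psi>
    unfolding sum.cartesian_product by (rule sum.cong) (auto simp: dual_coords_def)
  with \<open>D > 0\<close> n \<phi> show ?thesis by auto
qed

lemma (in comm_group) dual_apply_finsum_at_one:
  assumes "finite (carrier G)" and M: "module (group_ring G) M" and "finite A" and A: "A \<subseteq> carrier M"
    and \<psi>: "\<psi> \<in> carrier (dual (group_ring G) M)" and r: "\<And>a. r a \<in> carrier (group_ring G)"
  shows "\<psi> (\<Oplus>\<^bsub>M\<^esub> a\<in>A. r a \<odot>\<^bsub>M\<^esub> a) \<one> = (\<Sum>a\<in>A. \<Sum>g\<in>carrier G. \<psi> a g * r a (inv g))"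
proof -
  let ?R = "group_ring G"
  interpret R: cring ?R by (rule cring_group_ring[OF assms(1)])
  interpret M: module ?R M by (rule M)
  have \<psi>_lin: "linear_form ?R M \<psi>" using \<psi> by (simp add: dual_carrier_iff)
  have terms: "(\<lambda>a. r a \<odot>\<^bsub>M\<^esub> a) \<in> A \<rightarrow> carrier M" using A r by auto
  have vals: "r a \<otimes>\<^bsub>?R\<^esub> \<psi> a \<in> carrier ?R" if "a \<in> A" for a
    using that A r linear_form_closed[OF \<psi>_lin] by auto
  have "\<psi> (\<Oplus>\<^bsub>M\<^esub> a\<in>A. r a \<odot>\<^bsub>M\<^esub> a) = (\<Oplus>\<^bsub>?R\<^esub> a\<in>A. r a \<otimes>\<^bsub>?R\<^esub> \<psi> a)"
    unfolding linear_form_finsum[OF M \<psi>_lin \<open>finite A\<close> terms]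
    by (rule R.finsum_cong') (use A r linear_form_smult[OF \<psi>_lin] vals in auto)
  then have "\<psi> (\<Oplus>\<^bsub>M\<^esub> a\<in>A. r a \<odot>\<^bsub>M\<^esub> a) \<one> = (\<Sum>a\<in>A. \<Sum>u\<in>carrier G. r a u * \<psi> a (inv u))"
    using vals by (simp add: group_ring_finsum[OF R.is_cring \<open>finite A\<close>] group_ring_mult)
  also have "\<dots> = (\<Sum>a\<in>A. \<Sum>g\<in>carrier G. \<psi> a g * r a (inv g))"
    by (intro sum.cong refl sum.reindex_bij_witness[where i="\<lambda>u. inv u" and j="\<lambda>u. inv u"]) auto
  finally show ?thesis .
qed

text \<open>The functional \<open>\<psi> \<mapsto> y \<psi> \<one>\<close> on \<open>M\<^sup>*\<close>, read in the coordinates \<open>dual_coords\<close>, is up to a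
  factor a dot product (\<open>bidual_at_one_dot\<close>); its coefficients define \<open>x\<close>, and \<open>G\<close>-linearity
  propagates the identity from \<open>\<one>\<close> to all of \<open>G\<close>.\<close>

lemma (in comm_group) bidual_multiple_in_image:
  fixes M :: "('a \<Rightarrow> int, 'm) module"
  assumes fin: "finite (carrier G)" and M: "module (group_ring G) M" and "fin_gen (group_ring G) M"
    and y: "y \<in> carrier (dual (group_ring G) (dual (group_ring G) M))"
  shows "\<exists>k x. k \<noteq> 0 \<and> x \<in> carrier M \<and> (\<forall>\<psi>\<in>carrier (dual (group_ring G) M). \<psi> x = int_scale k (y \<psi>))"
proof -
  let ?R = "group_ring G" and ?MD = "dual (group_ring G) M"
  interpret R: cring ?R by (rule cring_group_ring[OF fin])
  interpret M: module ?R M by (rule M)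
  have MD: "module_closed ?R ?MD" by (rule module_closed_dual[OF R.is_cring M.module_closed])
  have MDD: "module_closed ?R (dual ?R ?MD)" by (rule module_closed_dual[OF R.is_cring MD])
  obtain A where "finite A" and A: "A \<subseteq> carrier M"
    and gen: "\<And>x. x \<in> carrier M \<Longrightarrow> \<exists>c. c \<in> A \<rightarrow> carrier ?R \<and> x = (\<Oplus>\<^bsub>M\<^esub> a\<in>A. c a \<odot>\<^bsub>M\<^esub> a)"
    using \<open>fin_gen ?R M\<close> unfolding fin_gen_def by blast
  obtain D n where "D > 0"
    and n: "\<And>\<psi>. \<psi> \<in> carrier ?MD \<Longrightarrow> D * y \<psi> \<one> = (\<Sum>a\<in>A. \<Sum>g\<in>carrier G. \<psi> a g * n (a, g))"
    using bidual_at_one_dot[OF fin M \<open>finite A\<close> A gen y] by blast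
  define r where "r a = (\<lambda>u. if u \<in> carrier G then n (a, inv u) else 0)" for a
  have r: "r a \<in> carrier ?R" for a by (simp add: r_def group_ring_carrier_iff)
  define x where "x = (\<Oplus>\<^bsub>M\<^esub> a\<in>A. r a \<odot>\<^bsub>M\<^esub> a)"
  have x: "x \<in> carrier M" unfolding x_def using A r by (intro M.finsum_closed) auto
  have at_one: "\<psi> x \<one> = D * y \<psi> \<one>" if \<psi>: "\<psi> \<in> carrier ?MD" for \<psi>
    using dual_apply_finsum_at_one[OF fin M \<open>finite A\<close> A \<psi> r] n[OF \<psi>] by (simp add: x_def r_def)
  have "\<psi> x = int_scale D (y \<psi>)" if \<psi>: "\<psi> \<in> carrier ?MD" for \<psi>
  proof -
    have y_lin: "linear_form ?R ?MD y" using y by (simp add: dual_carrier_iff)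
    have scaled: "int_scale D \<one>\<^bsub>?R\<^esub> \<odot>\<^bsub>dual ?R ?MD\<^esub> y \<in> carrier (dual ?R ?MD)"
      by (rule module_closed_smult[OF MDD int_scale_carrier[OF R.one_closed] y])
    have eval: "eval_bidual ?R M x \<in> carrier (dual ?R ?MD)" by (rule eval_bidual_closed[OF M x])
    have "eval_bidual ?R M x \<psi> = (int_scale D \<one>\<^bsub>?R\<^esub> \<odot>\<^bsub>dual ?R ?MD\<^esub> y) \<psi>"
    proof (rule linear_form_eq_if_eq_at_one[OF fin MD _ _ _ \<psi>])
      show "linear_form ?R ?MD (eval_bidual ?R M x)" using eval by (simp add: dual_carrier_iff)
      show "linear_form ?R ?MD (int_scale D \<one>\<^bsub>?R\<^esub> \<odot>\<^bsub>dual ?R ?MD\<^esub> y)"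
        using scaled by (simp add: dual_carrier_iff)
      show "eval_bidual ?R M x \<psi>' \<one> = (int_scale D \<one>\<^bsub>?R\<^esub> \<odot>\<^bsub>dual ?R ?MD\<^esub> y) \<psi>' \<one>"
        if "\<psi>' \<in> carrier ?MD" for \<psi>'
        using that at_one linear_form_closed[OF y_lin that]
        by (simp add: eval_bidual_def dual_smult int_scale_mult_left) (simp add: int_scale_def)
    qed
    then show ?thesis
      using \<psi> linear_form_closed[OF y_lin \<psi>] by (simp add: eval_bidual_def dual_smult int_scale_mult_left)
  qed
  then show ?thesis using \<open>D > 0\<close> x by (intro exI[of _ D] exI[of _ x]) auto
qed

section \<open>The invariant bidual\<close>

locale invariant_bidual = quotient_group_ring G H for G :: "('g, 'z) monoid_scheme" (structure) and H +
  fixes M :: "('g \<Rightarrow> int, 'm) module"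
  assumes module_M: "module (group_ring G) M" and fin_gen_M: "fin_gen (group_ring G) M"
begin

abbreviation "MD \<equiv> dual R M"
abbreviation "MDD \<equiv> dual R MD"
abbreviation "Y \<equiv> invariants G H MDD"
abbreviation "YD \<equiv> dual S Y"
abbreviation "ev \<equiv> eval_bidual R M"

definition down_form :: "('m \<Rightarrow> 'g \<Rightarrow> int) \<Rightarrow> ((('m \<Rightarrow> 'g \<Rightarrow> int) \<Rightarrow> 'g \<Rightarrow> int) \<Rightarrow> 'g set \<Rightarrow> int)" where
  "down_form \<phi> = (\<lambda>y\<in>carrier Y. \<kappa> (y \<phi>))"

definition up_form :: "((('m \<Rightarrow> 'g \<Rightarrow> int) \<Rightarrow> 'g \<Rightarrow> int) \<Rightarrow> 'g set \<Rightarrow> int) \<Rightarrow> 'm \<Rightarrow> 'g \<Rightarrow> int" where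
  "up_form \<chi> = (\<lambda>x\<in>carrier M. \<iota> (\<chi> (N \<odot>\<^bsub>MDD\<^esub> ev x)))"

lemma module_closed_M: "module_closed R M"
  by (rule module.module_closed[OF module_M])

lemma module_closed_MD: "module_closed R MD"
  by (rule module_closed_dual[OF cring_R module_closed_M])

lemma module_closed_MDD: "module_closed R MDD"
  by (rule module_closed_dual[OF cring_R module_closed_MD])

lemma linear_form_MD: "\<psi> \<in> carrier MD \<Longrightarrow> linear_form R M \<psi>"
  by (simp add: dual_carrier_iff)

lemma Y_subset: "y \<in> carrier Y \<Longrightarrow> y \<in> carrier MDD"
  by (simp add: invariants_carrier_iff)

lemma linear_form_Y: "y \<in> carrier Y \<Longrightarrow> linear_form R MD y"
  by (simp add: invariants_carrier_iff dual_carrier_iff)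

lemma linear_form_YD: "\<chi> \<in> carrier YD \<Longrightarrow> linear_form S Y \<chi>"
  by (simp add: dual_carrier_iff)

lemma invariant_Y_apply:
  assumes y: "y \<in> carrier Y" and \<psi>: "\<psi> \<in> carrier MD"
  shows "invariant_elem G H (y \<psi>)"
proof -
  have "gr_elem G h \<otimes>\<^bsub>R\<^esub> y \<psi> = y \<psi>" if "h \<in> H" for h
    using fun_cong[of _ _ \<psi>, OF bspec[OF conjunct2[OF y[unfolded invariants_carrier_iff]] that]] \<psi>
    by (simp add: dual_smult)
  then show ?thesis
    using linear_form_closed[OF linear_form_Y[OF y] \<psi>] by (simp add: invariant_elem_def)
qed

lemma Y_memberI:
  assumes y: "y \<in> carrier MDD" and inv: "\<And>\<psi>. \<psi> \<in> carrier MD \<Longrightarrow> invariant_elem G H (y \<psi>)"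
  shows "y \<in> carrier Y"
proof -
  have "gr_elem G h \<odot>\<^bsub>MDD\<^esub> y = y" if "h \<in> H" for h
  proof
    fix \<psi>
    show "(gr_elem G h \<odot>\<^bsub>MDD\<^esub> y) \<psi> = y \<psi>"
      using inv that linear_form_undefined[of R MD y \<psi>] y
      by (cases "\<psi> \<in> carrier MD") (simp_all add: dual_smult invariant_elem_def dual_carrier_iff)
  qed
  then show ?thesis using y by (simp add: invariants_carrier_iff)
qed

lemma module_closed_Y: "module_closed S Y"
  unfolding module_closed_def
proof (intro conjI ballI)
  fix x y assume x: "x \<in> carrier Y" and y: "y \<in> carrier Y"
  show "x \<oplus>\<^bsub>Y\<^esub> y \<in> carrier Y" unfolding invariants_add
  proof (rule Y_memberI)
    show "x \<oplus>\<^bsub>MDD\<^esub> y \<in> carrier MDD"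
      by (rule module_closed_add[OF module_closed_MDD Y_subset[OF x] Y_subset[OF y]])
    show "invariant_elem G H ((x \<oplus>\<^bsub>MDD\<^esub> y) \<psi>)" if "\<psi> \<in> carrier MD" for \<psi>
      using that invariant_Y_apply[OF x that] invariant_Y_apply[OF y that] by (simp add: dual_add invariant_add)
  qed
next
  fix f y assume f: "f \<in> carrier S" and y: "y \<in> carrier Y"
  show "f \<odot>\<^bsub>Y\<^esub> y \<in> carrier Y" unfolding invariants_smult
  proof (rule Y_memberI)
    show "q f \<odot>\<^bsub>MDD\<^esub> y \<in> carrier MDD"
      by (rule module_closed_smult[OF module_closed_MDD quot_lift_carrier Y_subset[OF y]])
    show "invariant_elem G H ((q f \<odot>\<^bsub>MDD\<^esub> y) \<psi>)" if "\<psi> \<in> carrier MD" for \<psi>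
      using that invariant_Y_apply[OF y that] by (simp add: dual_smult invariant_mult quot_lift_carrier)
  qed
qed

lemma module_closed_YD: "module_closed S YD"
  by (rule module_closed_dual[OF cring_S module_closed_Y])

lemma eval_bidual_invariants:
  assumes x: "x \<in> carrier (invariants G H M)"
  shows "ev x \<in> carrier Y"
proof (rule Y_memberI)
  have xM: "x \<in> carrier M" using x by (simp add: invariants_carrier_iff)
  show "ev x \<in> carrier MDD" by (rule eval_bidual_closed[OF module_M xM])
  fix \<psi> assume \<psi>: "\<psi> \<in> carrier MD"
  have "gr_elem G h \<otimes>\<^bsub>R\<^esub> \<psi> x = \<psi> x" if "h \<in> H" for h
  proof -
    have "gr_elem G h \<odot>\<^bsub>M\<^esub> x = x" using x that by (simp add: invariants_carrier_iff)
    with linear_form_smult[OF linear_form_MD[OF \<psi>] gr_elem_carrier xM, of h] show ?thesis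
      by metis
  qed
  then show "invariant_elem G H (ev x \<psi>)"
    using \<psi> linear_form_closed[OF linear_form_MD[OF \<psi>] xM] by (simp add: eval_bidual_apply invariant_elem_def)
qed

lemma norm_eval_apply: "\<psi> \<in> carrier MD \<Longrightarrow> (N \<odot>\<^bsub>MDD\<^esub> ev x) \<psi> = N \<otimes>\<^bsub>R\<^esub> \<psi> x"
  by (simp add: dual_smult eval_bidual_apply)

lemma norm_eval_in_Y:
  assumes x: "x \<in> carrier M"
  shows "N \<odot>\<^bsub>MDD\<^esub> ev x \<in> carrier Y"
proof (rule Y_memberI)
  show "N \<odot>\<^bsub>MDD\<^esub> ev x \<in> carrier MDD"
    by (rule module_closed_smult[OF module_closed_MDD norm_elem_carrier eval_bidual_closed[OF module_M x]])
  show "invariant_elem G H ((N \<odot>\<^bsub>MDD\<^esub> ev x) \<psi>)" if "\<psi> \<in> carrier MD" for \<psi>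
    using that by (simp add: norm_eval_apply invariant_norm_mult)
qed

lemma norm_eval_add:
  assumes x: "x \<in> carrier M" and x': "x' \<in> carrier M"
  shows "N \<odot>\<^bsub>MDD\<^esub> ev (x \<oplus>\<^bsub>M\<^esub> x') = (N \<odot>\<^bsub>MDD\<^esub> ev x) \<oplus>\<^bsub>Y\<^esub> (N \<odot>\<^bsub>MDD\<^esub> ev x')"
proof -
  interpret R: cring R by (rule cring_R)
  have "N \<otimes>\<^bsub>R\<^esub> \<psi> (x \<oplus>\<^bsub>M\<^esub> x') = N \<otimes>\<^bsub>R\<^esub> \<psi> x \<oplus>\<^bsub>R\<^esub> N \<otimes>\<^bsub>R\<^esub> \<psi> x'" if \<psi>: "\<psi> \<in> carrier MD" for \<psi>
    using linear_form_add[OF linear_form_MD[OF \<psi>] x x'] linear_form_closed[OF linear_form_MD[OF \<psi>]] x x'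
    by (simp add: R.r_distr norm_elem_carrier)
  then show ?thesis unfolding invariants_add dual_add dual_smult
    by (intro restrict_ext) (simp add: eval_bidual_apply)
qed

lemma norm_eval_smult:
  assumes r: "r \<in> carrier R" and x: "x \<in> carrier M"
  shows "N \<odot>\<^bsub>MDD\<^esub> ev (r \<odot>\<^bsub>M\<^esub> x) = \<pi> r \<odot>\<^bsub>Y\<^esub> (N \<odot>\<^bsub>MDD\<^esub> ev x)"
proof -
  interpret R: cring R by (rule cring_R)
  have "N \<otimes>\<^bsub>R\<^esub> \<psi> (r \<odot>\<^bsub>M\<^esub> x) = q (\<pi> r) \<otimes>\<^bsub>R\<^esub> (N \<otimes>\<^bsub>R\<^esub> \<psi> x)" if \<psi>: "\<psi> \<in> carrier MD" for \<psi>
  proof -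
    have \<psi>x: "\<psi> x \<in> carrier R" by (rule linear_form_closed[OF linear_form_MD[OF \<psi>] x])
    have "N \<otimes>\<^bsub>R\<^esub> \<psi> (r \<odot>\<^bsub>M\<^esub> x) = r \<otimes>\<^bsub>R\<^esub> (N \<otimes>\<^bsub>R\<^esub> \<psi> x)"
      using linear_form_smult[OF linear_form_MD[OF \<psi>] r x] \<psi>x r by (simp add: R.m_lcomm norm_elem_carrier)
    then show ?thesis by (simp add: mult_invariant_eq_quot_lift[OF r invariant_norm_mult])
  qed
  then show ?thesis unfolding invariants_smult dual_smult
    by (intro restrict_ext) (simp add: eval_bidual_apply)
qed

lemma up_form_closed:
  assumes \<chi>: "\<chi> \<in> carrier YD"
  shows "up_form \<chi> \<in> carrier MD"
  unfolding dual_carrier_iff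
proof (rule linear_formI)
  note \<chi>_lin = linear_form_YD[OF \<chi>]
  fix x x' assume x: "x \<in> carrier M" and x': "x' \<in> carrier M"
  show "up_form \<chi> (x \<oplus>\<^bsub>M\<^esub> x') = up_form \<chi> x \<oplus>\<^bsub>R\<^esub> up_form \<chi> x'"
    using x x' module_closed_add[OF module_closed_M x x']
    by (simp add: up_form_def norm_eval_add linear_form_add[OF \<chi>_lin norm_eval_in_Y norm_eval_in_Y]
        pullback_add)
next
  note \<chi>_lin = linear_form_YD[OF \<chi>]
  fix r x assume r: "r \<in> carrier R" and x: "x \<in> carrier M"
  show "up_form \<chi> (r \<odot>\<^bsub>M\<^esub> x) = r \<otimes>\<^bsub>R\<^esub> up_form \<chi> x"
    using x r module_closed_smult[OF module_closed_M r x]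
    by (simp add: up_form_def norm_eval_smult linear_form_smult[OF \<chi>_lin pushforward_carrier norm_eval_in_Y]
        pullback_mult_pushforward linear_form_closed[OF \<chi>_lin norm_eval_in_Y])
qed (simp_all add: up_form_def pullback_carrier)

lemma up_form_add:
  assumes "\<chi> \<in> carrier YD" and "\<chi>' \<in> carrier YD"
  shows "up_form (\<chi> \<oplus>\<^bsub>YD\<^esub> \<chi>') = up_form \<chi> \<oplus>\<^bsub>MD\<^esub> up_form \<chi>'"
  unfolding up_form_def dual_add[of R M]
  by (intro restrict_ext) (simp add: dual_add norm_eval_in_Y pullback_add)

lemma up_form_smult:
  assumes "f \<in> carrier S" and "\<chi> \<in> carrier YD"
  shows "up_form (f \<odot>\<^bsub>YD\<^esub> \<chi>) = q f \<odot>\<^bsub>MD\<^esub> up_form \<chi>"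
  unfolding up_form_def dual_smult[of R M]
proof (intro restrict_ext)
  fix x assume "x \<in> carrier M"
  with norm_eval_in_Y[OF this] show "\<iota> ((f \<odot>\<^bsub>YD\<^esub> \<chi>) (N \<odot>\<^bsub>MDD\<^esub> ev x))
      = q f \<otimes>\<^bsub>R\<^esub> (\<lambda>x\<in>carrier M. \<iota> (\<chi> (N \<odot>\<^bsub>MDD\<^esub> ev x))) x"
    by (simp only: dual_smult[of S] restrict_apply' quot_lift_mult_pullback)
qed

lemma down_form_closed:
  assumes \<phi>: "\<phi> \<in> carrier MD"
  shows "down_form \<phi> \<in> carrier YD"
  unfolding dual_carrier_iff
proof (rule linear_formI)
  fix y y' assume y: "y \<in> carrier Y" and y': "y' \<in> carrier Y"
  show "down_form \<phi> (y \<oplus>\<^bsub>Y\<^esub> y') = down_form \<phi> y \<oplus>\<^bsub>S\<^esub> down_form \<phi> y'"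
    using y y' \<phi> module_closed_add[OF module_closed_Y y y']
    by (simp add: down_form_def invariants_add dual_add descend_add)
next
  fix f y assume f: "f \<in> carrier S" and y: "y \<in> carrier Y"
  show "down_form \<phi> (f \<odot>\<^bsub>Y\<^esub> y) = f \<otimes>\<^bsub>S\<^esub> down_form \<phi> y"
    using f y \<phi> module_closed_smult[OF module_closed_Y f y]
    by (simp add: down_form_def invariants_smult dual_smult descend_quot_lift_mult invariant_Y_apply)
qed (simp_all add: down_form_def descend_carrier)

lemma down_form_add:
  assumes "\<phi> \<in> carrier MD" and "\<phi>' \<in> carrier MD"
  shows "down_form (\<phi> \<oplus>\<^bsub>MD\<^esub> \<phi>') = down_form \<phi> \<oplus>\<^bsub>YD\<^esub> down_form \<phi>'"
  unfolding down_form_def dual_add[of S Y]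
  using assms by (intro restrict_ext) (simp add: linear_form_add[OF linear_form_Y] descend_add)

lemma down_form_smult:
  assumes "r \<in> carrier R" and "\<phi> \<in> carrier MD"
  shows "down_form (r \<odot>\<^bsub>MD\<^esub> \<phi>) = \<pi> r \<odot>\<^bsub>YD\<^esub> down_form \<phi>"
  unfolding down_form_def dual_smult[of S Y]
  using assms by (intro restrict_ext) (simp add: linear_form_smult[OF linear_form_Y] descend_mult invariant_Y_apply)

lemma up_form_down_form:
  assumes \<phi>: "\<phi> \<in> carrier MD"
  shows "up_form (down_form \<phi>) = N \<odot>\<^bsub>MD\<^esub> \<phi>"
  unfolding dual_smult[of R M] up_form_def
proof (intro restrict_ext)
  fix x assume x: "x \<in> carrier M"
  then show "\<iota> (down_form \<phi> (N \<odot>\<^bsub>MDD\<^esub> ev x)) = N \<otimes>\<^bsub>R\<^esub> \<phi> x"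
    using \<phi> norm_eval_in_Y[OF x] by (simp add: down_form_def norm_eval_apply pullback_descend invariant_norm_mult)
qed

text \<open>This is where the finite generation of \<open>M\<close> enters: \<open>y\<close> is replaced by an element of
  \<open>M\<close>, which is possible after multiplying by a nonzero integer.\<close>

lemma Y_apply_up_form:
  assumes y: "y \<in> carrier Y" and \<chi>: "\<chi> \<in> carrier YD"
  shows "y (up_form \<chi>) = int_scale (card H) (\<iota> (\<chi> y))"
proof -
  interpret S: cring S by (rule cring_S)
  obtain k x where "k \<noteq> 0" and x: "x \<in> carrier M" and kx: "\<And>\<psi>. \<psi> \<in> carrier MD \<Longrightarrow> \<psi> x = int_scale k (y \<psi>)"
    using bidual_multiple_in_image[OF finite_carrier module_M fin_gen_M Y_subset[OF y]] by blast
  define m where "m = k * int (card H)"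
  have m: "int_scale m \<one>\<^bsub>S\<^esub> \<in> carrier S" by (rule int_scale_carrier[OF S.one_closed])
  have \<chi>y: "\<chi> y \<in> carrier S" by (rule linear_form_closed[OF linear_form_YD[OF \<chi>] y])
  have "N \<odot>\<^bsub>MDD\<^esub> ev x = int_scale m \<one>\<^bsub>S\<^esub> \<odot>\<^bsub>Y\<^esub> y"
    unfolding invariants_smult dual_smult[of R MD]
  proof (rule restrict_ext)
    fix \<psi> assume \<psi>: "\<psi> \<in> carrier MD"
    have "N \<otimes>\<^bsub>R\<^esub> ev x \<psi> = int_scale m (y \<psi>)"
      using \<psi> kx[OF \<psi>] invariant_Y_apply[OF y \<psi>]
      by (simp add: eval_bidual_apply int_scale_mult_right norm_mult_invariant int_scale_int_scale m_def
          mult.commute)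
    then show "N \<otimes>\<^bsub>R\<^esub> ev x \<psi> = q (int_scale m \<one>\<^bsub>S\<^esub>) \<otimes>\<^bsub>R\<^esub> y \<psi>"
      by (simp add: quot_lift_int_scale_one invariant_Y_apply[OF y \<psi>])
  qed
  then have "up_form \<chi> x = int_scale m (\<iota> (\<chi> y))"
    using x linear_form_smult[OF linear_form_YD[OF \<chi>] m y] \<chi>y
    by (simp add: up_form_def int_scale_mult_left pullback_int_scale)
  then have "int_scale k (y (up_form \<chi>)) = int_scale k (int_scale (card H) (\<iota> (\<chi> y)))"
    using kx[OF up_form_closed[OF \<chi>]] by (simp add: int_scale_int_scale m_def)
  then show ?thesis using \<open>k \<noteq> 0\<close> by (rule int_scale_cancel[rotated])
qed

lemma down_form_up_form:
  assumes \<chi>: "\<chi> \<in> carrier YD"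
  shows "down_form (up_form \<chi>) = int_scale (card H) \<one>\<^bsub>S\<^esub> \<odot>\<^bsub>YD\<^esub> \<chi>"
  unfolding down_form_def dual_smult[of S Y]
proof (rule restrict_ext)
  interpret S: cring S by (rule cring_S)
  fix y assume y: "y \<in> carrier Y"
  have "\<chi> y \<in> carrier S" by (rule linear_form_closed[OF linear_form_YD[OF \<chi>] y])
  then show "\<kappa> (y (up_form \<chi>)) = int_scale (card H) \<one>\<^bsub>S\<^esub> \<otimes>\<^bsub>S\<^esub> \<chi> y"
    by (simp add: Y_apply_up_form[OF y \<chi>] descend_int_scale descend_pullback int_scale_mult_left)
qed

end

section \<open>The isomorphism\<close>

context invariant_bidual
begin

definition ext_bidual_map :: "nat \<Rightarrow> (((('m \<Rightarrow> 'g \<Rightarrow> int) \<Rightarrow> 'g \<Rightarrow> int) \<Rightarrow> 'g set \<Rightarrow> int) list \<Rightarrow> 'g set \<Rightarrow> int)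
    \<Rightarrow> ('m \<Rightarrow> 'g \<Rightarrow> int) list \<Rightarrow> 'g \<Rightarrow> int" where
  "ext_bidual_map s \<Psi> = (\<lambda>\<phi>s\<in>tuples MD s. \<iota> (\<Psi> (map down_form \<phi>s)))"

lemma invariant_alt_dual_apply:
  assumes \<Theta>: "\<Theta> \<in> carrier (invariants G H (alt_dual R MD s))" and \<phi>s: "\<phi>s \<in> tuples MD s"
  shows "invariant_elem G H (\<Theta> \<phi>s)"
proof -
  have "alt_multilinear R MD s \<Theta>" using \<Theta> by (simp add: invariants_carrier_iff alt_dual_carrier_iff)
  moreover have "gr_elem G h \<otimes>\<^bsub>R\<^esub> \<Theta> \<phi>s = \<Theta> \<phi>s" if "h \<in> H" for h
    using fun_cong[OF bspec[OF conjunct2[OF \<Theta>[unfolded invariants_carrier_iff]] that], of \<phi>s] \<phi>s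
    by (simp add: alt_dual_smult)
  ultimately show ?thesis using \<phi>s by (simp add: invariant_elem_def alt_multilinear_closed)
qed

lemma ext_bidual_map_closed:
  assumes "\<Psi> \<in> carrier (alt_dual S YD s)"
  shows "ext_bidual_map s \<Psi> \<in> carrier (invariants G H (alt_dual R MD s))"
proof -
  have \<Psi>: "alt_multilinear S YD s \<Psi>" using assms by (simp add: alt_dual_carrier_iff)
  have "alt_multilinear R MD s (ext_bidual_map s \<Psi>)"
    unfolding ext_bidual_map_def
  proof (rule alt_multilinear_transfer[OF \<Psi> module_closed_MD, where f=down_form and \<sigma>=\<pi> and h=\<iota>])
    fix r xs assume "r \<in> carrier R" and "xs \<in> tuples MD s"
    then show "\<iota> (\<pi> r \<otimes>\<^bsub>S\<^esub> \<Psi> (map down_form xs)) = r \<otimes>\<^bsub>R\<^esub> \<iota> (\<Psi> (map down_form xs))"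
      by (intro pullback_mult_pushforward alt_multilinear_closed[OF \<Psi>] tuples_map down_form_closed)
  qed (simp_all add: down_form_closed down_form_add down_form_smult pushforward_carrier pullback_carrier
      pullback_add pullback_zero)
  moreover have "gr_elem G h \<odot>\<^bsub>alt_dual R MD s\<^esub> ext_bidual_map s \<Psi> = ext_bidual_map s \<Psi>" if "h \<in> H" for h
    unfolding alt_dual_smult ext_bidual_map_def
    by (rule restrict_ext) (use that invariant_pullback in \<open>simp add: invariant_elem_def\<close>)
  ultimately show ?thesis by (simp add: invariants_carrier_iff alt_dual_carrier_iff)
qed

lemma ext_bidual_map_add:
  assumes "\<Psi> \<in> carrier (alt_dual S YD s)" and "\<Psi>' \<in> carrier (alt_dual S YD s)"
  shows "ext_bidual_map s (\<Psi> \<oplus>\<^bsub>alt_dual S YD s\<^esub> \<Psi>')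
    = ext_bidual_map s \<Psi> \<oplus>\<^bsub>invariants G H (alt_dual R MD s)\<^esub> ext_bidual_map s \<Psi>'"
  unfolding invariants_add alt_dual_add ext_bidual_map_def
  by (rule restrict_ext) (simp add: tuples_map down_form_closed pullback_add)

lemma ext_bidual_map_smult:
  assumes "f \<in> carrier S"
  shows "ext_bidual_map s (f \<odot>\<^bsub>alt_dual S YD s\<^esub> \<Psi>) = f \<odot>\<^bsub>invariants G H (alt_dual R MD s)\<^esub> ext_bidual_map s \<Psi>"
  unfolding invariants_smult alt_dual_smult ext_bidual_map_def
  by (rule restrict_ext) (simp add: tuples_map down_form_closed quot_lift_mult_pullback)

lemma ext_bidual_map_up_forms:
  assumes \<Psi>: "\<Psi> \<in> carrier (alt_dual S YD s)" and \<chi>s: "\<chi>s \<in> tuples YD s"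
  shows "ext_bidual_map s \<Psi> (map up_form \<chi>s) = int_scale (int (card H) ^ s) (\<iota> (\<Psi> \<chi>s))"
proof -
  interpret S: cring S by (rule cring_S)
  have \<Psi>': "alt_multilinear S YD s \<Psi>" using \<Psi> by (simp add: alt_dual_carrier_iff)
  have "map down_form (map up_form \<chi>s) = map (\<lambda>\<chi>. int_scale (card H) \<one>\<^bsub>S\<^esub> \<odot>\<^bsub>YD\<^esub> \<chi>) \<chi>s"
    using \<chi>s by (auto simp: tuples_iff down_form_up_form)
  then have "\<Psi> (map down_form (map up_form \<chi>s))
      = int_scale (card H) \<one>\<^bsub>S\<^esub> [^]\<^bsub>S\<^esub> s \<otimes>\<^bsub>S\<^esub> \<Psi> \<chi>s"
    using alt_multilinear_smult_all[OF cring_S module_closed_YD \<Psi>' int_scale_carrier[OF S.one_closed] \<chi>s]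
    by (simp only:)
  also have "\<dots> = int_scale (int (card H) ^ s) (\<Psi> \<chi>s)"
    by (rule group_ring_int_scale_one_pow[OF cring_S alt_multilinear_closed[OF \<Psi>' \<chi>s]])
  finally have "\<Psi> (map down_form (map up_form \<chi>s)) = int_scale (int (card H) ^ s) (\<Psi> \<chi>s)" .
  then show ?thesis
    using \<chi>s by (simp add: ext_bidual_map_def tuples_map up_form_closed pullback_int_scale)
qed

lemma ext_bidual_map_inj: "inj_on (ext_bidual_map s) (carrier (alt_dual S YD s))"
proof (rule inj_onI)
  fix \<Psi> \<Psi>' assume \<Psi>: "\<Psi> \<in> carrier (alt_dual S YD s)" and \<Psi>': "\<Psi>' \<in> carrier (alt_dual S YD s)"
    and eq: "ext_bidual_map s \<Psi> = ext_bidual_map s \<Psi>'"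
  have am: "alt_multilinear S YD s \<Psi>" "alt_multilinear S YD s \<Psi>'"
    using \<Psi> \<Psi>' by (simp_all add: alt_dual_carrier_iff)
  show "\<Psi> = \<Psi>'"
  proof
    fix \<chi>s
    show "\<Psi> \<chi>s = \<Psi>' \<chi>s"
    proof (cases "\<chi>s \<in> tuples YD s")
      case True
      have "int_scale (int (card H) ^ s) (\<iota> (\<Psi> \<chi>s)) = int_scale (int (card H) ^ s) (\<iota> (\<Psi>' \<chi>s))"
        using ext_bidual_map_up_forms[OF \<Psi> True] ext_bidual_map_up_forms[OF \<Psi>' True] unfolding eq
        by (rule trans[OF sym])
      moreover have "int (card H) ^ s \<noteq> 0" using card_H_pos by simp
      ultimately have "\<iota> (\<Psi> \<chi>s) = \<iota> (\<Psi>' \<chi>s)" by (metis int_scale_cancel)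
      then show ?thesis
        using pullback_inj alt_multilinear_closed[OF am(1) True] alt_multilinear_closed[OF am(2) True] by blast
    qed (simp add: alt_multilinear_undefined[OF am(1)] alt_multilinear_undefined[OF am(2)])
  qed
qed

text \<open>Induction on the number of arguments from the image of \<open>up_form\<close>: the last such slot, divided
  by \<open>|H|\<^sup>k\<close>, is an element \<open>y\<close> of \<open>Y\<close>, and \<open>Y_apply_up_form\<close> yields one more factor \<open>|H|\<close>.\<close>

lemma invariant_alt_dual_divisible:
  assumes \<Theta>: "\<Theta> \<in> carrier (invariants G H (alt_dual R MD s))"
  shows "k \<le> s \<Longrightarrow> \<chi>s \<in> tuples YD k \<Longrightarrow> \<psi>s \<in> tuples MD (s - k) \<Longrightarrow>
    \<exists>f. invariant_elem G H f \<and> \<Theta> (map up_form \<chi>s @ \<psi>s) = int_scale (int (card H) ^ k) f"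
proof (induction k arbitrary: \<chi>s \<psi>s)
  case 0
  then show ?case using invariant_alt_dual_apply[OF \<Theta>] by (simp add: tuples_iff)
next
  case (Suc k)
  have \<Theta>': "alt_multilinear R MD s \<Theta>" using \<Theta> by (simp add: invariants_carrier_iff alt_dual_carrier_iff)
  obtain \<chi>s' \<chi> where \<chi>s: "\<chi>s = \<chi>s' @ [\<chi>]" and \<chi>s': "\<chi>s' \<in> tuples YD k" and \<chi>: "\<chi> \<in> carrier YD"
    using Suc.prems(2) by (cases \<chi>s rule: rev_cases) (auto simp: tuples_iff)
  define m where "m = int (card H) ^ k"
  have "m \<noteq> 0" using card_H_pos by (simp add: m_def)
  define L where "L \<phi> = map up_form \<chi>s' @ \<phi> # \<psi>s" for \<phi>
  have L: "L \<phi> \<in> tuples MD s" if "\<phi> \<in> carrier MD" for \<phi>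
    using that Suc.prems \<chi>s' up_form_closed by (auto simp: L_def tuples_iff)
  have L_update: "(L \<phi>)[k := \<phi>'] = L \<phi>'" for \<phi> \<phi>'
    using \<chi>s' by (simp add: L_def list_update_append tuples_iff)
  have divisible: "\<exists>f. invariant_elem G H f \<and> \<Theta> (L \<phi>) = int_scale m f" if "\<phi> \<in> carrier MD" for \<phi>
    using Suc.IH[OF _ \<chi>s', of "\<phi> # \<psi>s"] Suc.prems(1,3) that by (simp add: L_def m_def tuples_iff)
  define slot where "slot = (\<lambda>\<phi>\<in>carrier MD. \<Theta> (L \<phi>))"
  define y where "y = (\<lambda>\<phi>\<in>carrier MD. int_quot m (slot \<phi>))"
  have "linear_form R MD (\<lambda>\<phi>\<in>carrier MD. \<Theta> ((L (up_form \<chi>))[k := \<phi>]))"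
    using Suc.prems(1) by (intro linear_form_slot[OF module_closed_MD \<Theta>' L[OF up_form_closed[OF \<chi>]]]) simp
  then have "linear_form R MD slot" by (simp add: L_update slot_def)
  then have "linear_form R MD y"
    unfolding y_def by (rule linear_form_int_quot[OF _ module_closed_MD \<open>m \<noteq> 0\<close>])
      (use divisible in \<open>auto simp: slot_def\<close>)
  moreover have "invariant_elem G H (y \<phi>)" if "\<phi> \<in> carrier MD" for \<phi>
    using divisible[OF that] that by (auto simp: y_def slot_def int_quot_int_scale[OF \<open>m \<noteq> 0\<close>])
  ultimately have y: "y \<in> carrier Y" by (intro Y_memberI) (simp_all add: dual_carrier_iff)
  have "\<Theta> (map up_form \<chi>s @ \<psi>s) = \<Theta> (L (up_form \<chi>))" by (simp add: \<chi>s L_def)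
  also have "\<dots> = int_scale m (y (up_form \<chi>))"
    using divisible[OF up_form_closed[OF \<chi>]] up_form_closed[OF \<chi>]
    by (auto simp: y_def slot_def int_quot_int_scale[OF \<open>m \<noteq> 0\<close>])
  also have "\<dots> = int_scale (int (card H) ^ Suc k) (\<iota> (\<chi> y))"
    by (simp add: Y_apply_up_form[OF y \<chi>] int_scale_int_scale m_def mult.commute)
  finally show ?case using invariant_pullback by blast
qed

lemma invariant_alt_dual_up_forms:
  assumes "\<Theta> \<in> carrier (invariants G H (alt_dual R MD s))" and "\<chi>s \<in> tuples YD s"
  shows "\<exists>f. invariant_elem G H f \<and> \<Theta> (map up_form \<chi>s) = int_scale (int (card H) ^ s) f"
  using invariant_alt_dual_divisible[OF assms(1) order_refl assms(2), of "[]"] by (simp add: tuples_iff)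

definition ext_bidual_map_inv ::
    "nat \<Rightarrow> (('m \<Rightarrow> 'g \<Rightarrow> int) list \<Rightarrow> 'g \<Rightarrow> int) \<Rightarrow> ((('m \<Rightarrow> 'g \<Rightarrow> int) \<Rightarrow> 'g \<Rightarrow> int) \<Rightarrow> 'g set \<Rightarrow> int) list
      \<Rightarrow> 'g set \<Rightarrow> int" where
  "ext_bidual_map_inv s \<Theta> = (\<lambda>\<chi>s\<in>tuples YD s. \<kappa> (int_quot (int (card H) ^ s) (\<Theta> (map up_form \<chi>s))))"

lemma ext_bidual_map_inv_closed:
  assumes \<Theta>: "\<Theta> \<in> carrier (invariants G H (alt_dual R MD s))"
  shows "ext_bidual_map_inv s \<Theta> \<in> carrier (alt_dual S YD s)"
proof -
  have \<Theta>': "alt_multilinear R MD s \<Theta>" using \<Theta> by (simp add: invariants_carrier_iff alt_dual_carrier_iff)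
  define m where "m = int (card H) ^ s"
  have "m \<noteq> 0" using card_H_pos by (simp add: m_def)
  note divisible = invariant_alt_dual_up_forms[OF \<Theta>, folded m_def]
  have "alt_multilinear S YD s (\<lambda>\<chi>s\<in>tuples YD s. \<kappa> (int_quot m (\<Theta> (map up_form \<chi>s))))"
  proof (rule alt_multilinear_transfer[OF \<Theta>' module_closed_YD,
        where f=up_form and \<sigma>=q and h="\<lambda>a. \<kappa> (int_quot m a)"])
    fix xs ys assume xs: "xs \<in> tuples YD s" and ys: "ys \<in> tuples YD s"
    show "\<kappa> (int_quot m (\<Theta> (map up_form xs) \<oplus>\<^bsub>R\<^esub> \<Theta> (map up_form ys)))
        = \<kappa> (int_quot m (\<Theta> (map up_form xs))) \<oplus>\<^bsub>S\<^esub> \<kappa> (int_quot m (\<Theta> (map up_form ys)))"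
      using divisible[OF xs] divisible[OF ys]
      by (auto simp: int_scale_add descend_add int_quot_int_scale[OF \<open>m \<noteq> 0\<close>])
  next
    fix r xs assume xs: "xs \<in> tuples YD s"
    show "\<kappa> (int_quot m (q r \<otimes>\<^bsub>R\<^esub> \<Theta> (map up_form xs))) = r \<otimes>\<^bsub>S\<^esub> \<kappa> (int_quot m (\<Theta> (map up_form xs)))"
      using divisible[OF xs]
      by (auto simp: int_scale_mult_right descend_quot_lift_mult int_quot_int_scale[OF \<open>m \<noteq> 0\<close>])
  next
    show "\<kappa> (int_quot m \<zero>\<^bsub>R\<^esub>) = \<zero>\<^bsub>S\<^esub>"
      using descend_zero by (simp add: int_quot_def group_ring_zero)
  qed (simp_all add: up_form_closed up_form_add up_form_smult quot_lift_carrier descend_carrier)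
  then show ?thesis by (simp add: alt_dual_carrier_iff ext_bidual_map_inv_def m_def)
qed

lemma ext_bidual_map_inv_right:
  assumes \<Theta>: "\<Theta> \<in> carrier (invariants G H (alt_dual R MD s))"
  shows "ext_bidual_map s (ext_bidual_map_inv s \<Theta>) = \<Theta>"
proof
  have \<Theta>': "alt_multilinear R MD s \<Theta>" using \<Theta> by (simp add: invariants_carrier_iff alt_dual_carrier_iff)
  fix \<phi>s
  show "ext_bidual_map s (ext_bidual_map_inv s \<Theta>) \<phi>s = \<Theta> \<phi>s"
  proof (cases "\<phi>s \<in> tuples MD s")
    case True
    have "map up_form (map down_form \<phi>s) = map (\<lambda>\<phi>. N \<odot>\<^bsub>MD\<^esub> \<phi>) \<phi>s"
      using True by (auto simp: tuples_iff up_form_down_form)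
    then have "\<Theta> (map up_form (map down_form \<phi>s)) = N [^]\<^bsub>R\<^esub> s \<otimes>\<^bsub>R\<^esub> \<Theta> \<phi>s"
      using alt_multilinear_smult_all[OF cring_R module_closed_MD \<Theta>' norm_elem_carrier True]
      by (simp only:)
    also have "\<dots> = int_scale (int (card H) ^ s) (\<Theta> \<phi>s)"
      using norm_pow_mult_invariant[OF invariant_alt_dual_apply[OF \<Theta> True]] by simp
    finally show ?thesis
      using True tuples_map[OF True down_form_closed] invariant_alt_dual_apply[OF \<Theta> True] card_H_pos
      by (simp add: ext_bidual_map_def ext_bidual_map_inv_def int_quot_int_scale pullback_descend)
  qed (simp add: ext_bidual_map_def alt_multilinear_undefined[OF \<Theta>'])
qed

lemma ext_bidual_map_iso:
  "module_iso S (alt_dual S YD s) (invariants G H (alt_dual R MD s)) (ext_bidual_map s)"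
  unfolding module_iso_def bij_betw_def
proof (intro conjI ballI)
  show "ext_bidual_map s ` carrier (alt_dual S YD s) = carrier (invariants G H (alt_dual R MD s))"
  proof
    show "ext_bidual_map s ` carrier (alt_dual S YD s) \<subseteq> carrier (invariants G H (alt_dual R MD s))"
      using ext_bidual_map_closed by blast
    show "carrier (invariants G H (alt_dual R MD s)) \<subseteq> ext_bidual_map s ` carrier (alt_dual S YD s)"
    proof
      fix \<Theta> assume \<Theta>: "\<Theta> \<in> carrier (invariants G H (alt_dual R MD s))"
      show "\<Theta> \<in> ext_bidual_map s ` carrier (alt_dual S YD s)"
        by (rule image_eqI[where x="ext_bidual_map_inv s \<Theta>"])
          (simp_all add: ext_bidual_map_inv_right[OF \<Theta>] ext_bidual_map_inv_closed[OF \<Theta>])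
    qed
  qed
qed (simp_all add: ext_bidual_map_inj ext_bidual_map_add ext_bidual_map_smult)

lemma ext_bidual_map_wedge_Nil:
  "ext_bidual_map 0 (wedge_to_bidual S Y []) = N \<odot>\<^bsub>ext_bidual R M 0\<^esub> wedge_to_bidual R M []"
proof -
  interpret R: cring R by (rule cring_R)
  show ?thesis
    unfolding ext_bidual_def ext_bidual_map_def alt_dual_smult wedge_to_bidual_def
    by (rule restrict_ext) (simp add: tuples_iff ring_det_0[OF cring_R] ring_det_0[OF cring_S] pullback_one
        norm_elem_carrier)
qed

lemma ext_bidual_map_wedge:
  assumes "s \<ge> 1" and xs: "length xs = s" "set xs \<subseteq> carrier (invariants G H M)"
  shows "[(card H ^ (s - 1))] \<cdot>\<^bsub>ext_bidual R M s\<^esub> ext_bidual_map s (wedge_to_bidual S Y (map ev xs))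
    = wedge_to_bidual R M xs"
  unfolding ext_bidual_def alt_dual_add_pow wedge_to_bidual_def[of R M xs] xs(1)
proof (rule restrict_ext)
  fix \<phi>s assume \<phi>s: "\<phi>s \<in> tuples MD s"
  have down: "map down_form \<phi>s \<in> tuples YD s" by (rule tuples_map[OF \<phi>s down_form_closed])
  have "length \<phi>s = s" using \<phi>s by (rule tuples_length)
  have x: "xs ! j \<in> carrier (invariants G H M)" if "j < s" for j using xs that by auto
  have "ring_det S s (\<lambda>i j. (map down_form \<phi>s ! i) (map ev xs ! j)) = ring_det S s (\<lambda>i j. \<kappa> ((\<phi>s ! i) (xs ! j)))"
    using eval_bidual_invariants[OF x] tuples_nth[OF \<phi>s] xs \<open>length \<phi>s = s\<close>
    by (intro ring_det_cong[OF cring_S]) (simp_all add: down_form_def eval_bidual_apply descend_carrier)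
  moreover have "int_scale (card H ^ (s - 1)) (\<iota> (ring_det S s (\<lambda>i j. \<kappa> ((\<phi>s ! i) (xs ! j)))))
      = ring_det R s (\<lambda>i j. (\<phi>s ! i) (xs ! j))"
    using invariant_Y_apply[OF eval_bidual_invariants[OF x] tuples_nth[OF \<phi>s]] \<open>s \<ge> 1\<close>
    by (intro pullback_det_descend) (simp add: eval_bidual_apply tuples_nth[OF \<phi>s])
  ultimately show "int_scale (int (card H ^ (s - 1))) (ext_bidual_map s (wedge_to_bidual S Y (map ev xs)) \<phi>s)
      = ring_det R s (\<lambda>i j. (\<phi>s ! i) (xs ! j))"
    using \<phi>s down xs by (simp add: ext_bidual_map_def wedge_to_bidual_def)
qed

end

theorem mainTheorem7:
  fixes G :: "('g, 'z) monoid_scheme" and H :: "'g set"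
    and M :: "('g \<Rightarrow> int, 'm) module" and s :: nat
  assumes "comm_group G" and "finite (carrier G)" and "subgroup H G"
    and "module (group_ring G) M" and "fin_gen (group_ring G) M"
  shows "\<exists>\<Phi>.
     module_iso (group_ring (G Mod H))
       (ext_bidual (group_ring (G Mod H))
          (invariants G H (dual (group_ring G) (dual (group_ring G) M))) s)
       (invariants G H (ext_bidual (group_ring G) M s)) \<Phi> \<and>
     (s = 0 \<longrightarrow>
        \<Phi> (wedge_to_bidual (group_ring (G Mod H))
              (invariants G H (dual (group_ring G) (dual (group_ring G) M))) [])
        = norm_elem G H \<odot>\<^bsub>ext_bidual (group_ring G) M 0\<^esub>
            wedge_to_bidual (group_ring G) M []) \<and>
     (s \<ge> 1 \<longrightarrow> (\<forall>xs. length xs = s \<and> set xs \<subseteq> carrier (invariants G H M) \<longrightarrow>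
        [(card H ^ (s - 1))] \<cdot>\<^bsub>ext_bidual (group_ring G) M s\<^esub>
          \<Phi> (wedge_to_bidual (group_ring (G Mod H))
                (invariants G H (dual (group_ring G) (dual (group_ring G) M)))
                (map (eval_bidual (group_ring G) M) xs))
        = wedge_to_bidual (group_ring G) M xs))"
proof -
  interpret invariant_bidual G H M
    using assms by (simp add: invariant_bidual_def invariant_bidual_axioms_def quotient_group_ring_def
        quotient_group_ring_axioms_def)
  show ?thesis
  proof (intro exI conjI impI allI)
    show "module_iso S (ext_bidual S Y s) (invariants G H (ext_bidual R M s)) (ext_bidual_map s)"
      unfolding ext_bidual_def by (rule ext_bidual_map_iso)
    show "ext_bidual_map s (wedge_to_bidual S Y []) = N \<odot>\<^bsub>ext_bidual R M 0\<^esub> wedge_to_bidual R M []"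
      if "s = 0" using that ext_bidual_map_wedge_Nil by simp
    show "[(card H ^ (s - 1))] \<cdot>\<^bsub>ext_bidual R M s\<^esub> ext_bidual_map s (wedge_to_bidual S Y (map ev xs))
        = wedge_to_bidual R M xs"
      if "s \<ge> 1" and "length xs = s \<and> set xs \<subseteq> carrier (invariants G H M)" for xs
      using that by (intro ext_bidual_map_wedge) simp_all
  qed
qed

end
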